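(* Let $\beta>0$ satisfy $\max_{I\ne *} |\mathbb{E}[\xi_\beta^I]| \le \sigma_\beta^2$. For any $h\ge 2$, $t \ge 0$, $L \in \mathbb{N}$, $\lambda \ge 0$ such that $\sigma_\beta^2 \, R_L^{(\lambda)} < 1$ we have, for any $q \in (1,\infty)$, \begin{equation*} \max_{I\ne *} \, \big\Vert \, \mathcal{W}_t \, |\widehat{\mathsf{U}}|_{L,\lambda, \beta}^{I} \, \tfrac{1}{\mathcal{W}_t} \, \big\Vert_{\ell^q \to \ell^q} \le 1 + \big(2\, \mathrm{e}^{4 \mathsf{c} \, t^2 L}\big)^h \, \frac{\sigma_\beta^2 \, R_L^{(\lambda)}} {1- \sigma_\beta^2 \, R_L^{(\lambda)}} \,. \end{equation*} Moreover, for any $s \ge 0$ and $\tau \in \{+1,-1\}$, \begin{equation*} \max_{\substack{J \, \text{pair}\\ I\ne *}} \, \big\Vert \, (\mathcal{V}^J_s)^{\tau} \, \mathcal{W}_t \, |\widehat{\mathsf{U}}|_{L,\lambda, \beta}^{I} \, \tfrac{1}{\mathcal{W}_t \, (\mathcal{V}^J_s)^{\tau} } \, \big\Vert_{\ell^q \to \ell^q} \le 1 + \big(2\, \mathrm{e}^{4 \mathsf{c} \, (t+s)^2 L}\big)^h \, \frac{\sigma_\beta^2 \, R_L^{(\lambda)}} {1- \sigma_\beta^2 \, R_L^{(\lambda)}} \,. \end{equation*}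
   Context: Let $S=(S_n)_{n\ge0}$ be a random walk on $\mathbb{Z}^2$ with symmetric step distribution $q_1(x)=q_1(-x)$ and sub-Gaussian tails: for some $c>0$, $\sum_{x\in\mathbb{Z}^2}\mathrm{e}^{t x^a}q_1(x)\le \mathrm{e}^{c t^2/2}$ for all $t\in\mathbb{R}$, $a=1,2$ (e.g. simple random walk). Let $q_n(x):=\mathrm{P}(S_n=x\mid S_0=0)$. Let $\mathsf{c}\in[1,\infty)$ be a constant such that for all $t\ge0$, $n\in\mathbb{N}$, $a=1,2$: $\sum_x \mathrm{e}^{t x^a}q_n(x)\le \mathrm{e}^{\mathsf{c} t^2 n/2}$, $\sum_x \mathrm{e}^{t x^a}q_n(x)^2/q_{2n}(0)\le \mathrm{e}^{\mathsf{c} t^2 n/2}$, $\sum_x \mathrm{e}^{t|x|}q_n(x)\le \mathsf{c}\,\mathrm{e}^{2\mathsf{c}t^2 n}$, $\sup_x \mathrm{e}^{t|x|}q_n(x)\le \mathsf{c}\,\mathrm{e}^{2\mathsf{c}t^2n}/n$ (such a constant exists under these assumptions). Disorder: $\omega(n,x)$ i.i.d. with mean $0$, variance $1$, $\lambda(\beta):=\log\mathbb{E}[\mathrm{e}^{\beta\omega}]<\infty$; $\xi_\beta(n,x):=\mathrm{e}^{\beta\omega(n,x)-\lambda(\beta)}-1$ and $\sigma_\beta^2:=\mathbb{E}[\xi_\beta^2]$. Fix $h\ge2$. For a partition $I=\{I^1,\dots,I^m\}$ of $\{1,\dots,h\}$ (with $*$ the partition into singletons), write $\mathbf{x}=(x^1,\dots,x^h)\in(\mathbb{Z}^2)^h$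 satisfies $\mathbf{x}\sim I$ if $x^a=x^b$ whenever $a,b$ lie in the same block, and $x^a\ne x^b$ whenever $a,b$ lie in distinct blocks both of size $\ge2$; $(\mathbb{Z}^2)^h_I:=\{\mathbf{x}:\mathbf{x}\sim I\}$. For $I\ne *$, $\mathbb{E}[\xi_\beta^I]:=\prod_{i:|I^i|\ge2}\mathbb{E}[\xi_\beta^{|I^i|}]$. A pair is a partition $\{\{a,b\},\{c\}:c\ne a,b\}$. Set $\mathsf{Q}^{I,J}_n(\mathbf{z},\mathbf{x}):=\mathbb{1}_{\{\mathbf{z}\sim I,\mathbf{x}\sim J\}}\prod_{i=1}^h q_n(x^i-z^i)$. For $m\ge1$ and $I\ne *$ let $|\mathsf{U}|^I_{m,\beta}(\mathbf{z},\mathbf{x}):=\sum_{k\ge1}|\mathbb{E}[\xi_\beta^I]|^k\sum_{0=n_0<n_1<\dots<n_k=m,\ \mathbf{y}_1,\dots,\mathbf{y}_{k-1}\in(\mathbb{Z}^2)^h}\prod_{i=1}^k\mathsf{Q}^{I,I}_{n_i-n_{i-1}}(\mathbf{y}_{i-1},\mathbf{y}_i)$ with $\mathbf{y}_0:=\mathbf{z}$, $\mathbf{y}_k:=\mathbf{x}$, and $|\widehat{\mathsf{U}}|^I_{L,\lambda,\beta}(\mathbf{z},\mathbf{x}):=\mathbb{1}_{\{\mathbf{z}=\mathbf{x}\sim I\}}+\sum_{m=1}^L\mathrm{e}^{-\lambda m}|\mathsf{U}|^I_{m,\beta}(\mathbf{z},\mathbf{x})$, viewed as an operator on $\ell^q((\mathbb{Z}^2)^h_I)$.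 Also $R_L^{(\lambda)}:=\sum_{n=1}^L\mathrm{e}^{-\lambda n}q_{2n}(0)$. Weights: $\mathcal{W}_t(\mathbf{x}):=\prod_{i=1}^h\mathrm{e}^{-t|x^i|}$, and for a pair $J=\{\{a,b\},\{c\}:c\ne a,b\}$, $\mathcal{V}^J_s(\mathbf{x}):=\mathrm{e}^{-s|x^a-x^b|}$; weights act as diagonal operators, i.e. $(\mathcal{W}\,\mathsf{A}\,\tfrac{1}{\mathcal{W}})(\mathbf{x},\mathbf{y})=\mathcal{W}(\mathbf{x})\mathsf{A}(\mathbf{x},\mathbf{y})/\mathcal{W}(\mathbf{y})$. $\|\cdot\|_{\ell^q\to\ell^q}$ is the operator norm. *)

theory Defs
  imports "HOL-Analysis.Analysis" "HOL-Probability.Probability"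
    "HOL-Library.Product_Plus" "HOL-Library.Disjoint_Sets"
begin

type_synonym site = "int \<times> int"
type_synonym config = "site list"  \<comment> \<open>configurations of length h, indices 0..h-1\<close>

definition znorm :: "site \<Rightarrow> real" where
  "znorm x = sqrt ((real_of_int (fst x))\<^sup>2 + (real_of_int (snd x))\<^sup>2)"

definition coord :: "nat \<Rightarrow> site \<Rightarrow> real" where
  "coord a x = (if a = 1 then real_of_int (fst x) else real_of_int (snd x))"

primrec walk :: "site pmf \<Rightarrow> nat \<Rightarrow> site pmf" where
  "walk p 0 = return_pmf 0"
| "walk p (Suc n) = bind_pmf (walk p n) (\<lambda>x. map_pmf (\<lambda>y. x + y) p)"

definition qn :: "site pmf \<Rightarrow> nat \<Rightarrow> site \<Rightarrow> real" where
  "qn p n x = pmf (walk p n) x"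

definition is_partition :: "nat \<Rightarrow> nat set set \<Rightarrow> bool" where
  "is_partition h I \<longleftrightarrow> partition_on {..<h} I"

definition star_partition :: "nat \<Rightarrow> nat set set" where
  "star_partition h = (\<lambda>i. {i}) ` {..<h}"

definition sim :: "config \<Rightarrow> nat set set \<Rightarrow> bool" where
  "sim x I \<longleftrightarrow>
     (\<forall>B\<in>I. \<forall>a\<in>B. \<forall>b\<in>B. x ! a = x ! b) \<and>
     (\<forall>B\<in>I. \<forall>B'\<in>I. B \<noteq> B' \<longrightarrow> card B \<ge> 2 \<longrightarrow> card B' \<ge> 2 \<longrightarrow>
        (\<forall>a\<in>B. \<forall>b\<in>B'. x ! a \<noteq> x ! b))"

definition configs :: "nat \<Rightarrow> config set" where
  "configs h = {x. length x = h}"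

definition configs_I :: "nat \<Rightarrow> nat set set \<Rightarrow> config set" where
  "configs_I h I = {x. length x = h \<and> sim x I}"

definition log_mgf :: "real measure \<Rightarrow> real \<Rightarrow> real" where
  "log_mgf \<mu> \<beta> = ln (\<integral>w. exp (\<beta> * w) \<partial>\<mu>)"

definition xi :: "real measure \<Rightarrow> real \<Rightarrow> real \<Rightarrow> real" where
  "xi \<mu> \<beta> w = exp (\<beta> * w - log_mgf \<mu> \<beta>) - 1"

definition xi_moment :: "real measure \<Rightarrow> real \<Rightarrow> nat \<Rightarrow> real" where
  "xi_moment \<mu> \<beta> k = (\<integral>w. (xi \<mu> \<beta> w) ^ k \<partial>\<mu>)"

definition sigma2 :: "real measure \<Rightarrow> real \<Rightarrow> real" where
  "sigma2 \<mu> \<beta> = xi_moment \<mu> \<beta> 2"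

definition xi_I :: "real measure \<Rightarrow> real \<Rightarrow> nat set set \<Rightarrow> real" where
  "xi_I \<mu> \<beta> I = (\<Prod>B\<in>{B\<in>I. card B \<ge> 2}. xi_moment \<mu> \<beta> (card B))"

definition QII :: "site pmf \<Rightarrow> nat \<Rightarrow> nat set set \<Rightarrow> nat \<Rightarrow> config \<Rightarrow> config \<Rightarrow> real" where
  "QII p h I n z x = (if sim z I \<and> sim x I then (\<Prod>i<h. qn p n (x ! i - z ! i)) else 0)"

text \<open>Uchain k m z x = sum over 0 = n_0 < n_1 < ... < n_k = m and y_1..y_(k-1) in (Z^2)^h
  of the product of QII (n_i - n_(i-1)) (y_(i-1), y_i), written recursively in k.\<close>
primrec Uchain :: "site pmf \<Rightarrow> nat \<Rightarrow> nat set set \<Rightarrow> nat \<Rightarrow> nat \<Rightarrow> config \<Rightarrow> config \<Rightarrow> real" where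
  "Uchain p h I 0 m z x = 0"
| "Uchain p h I (Suc k) m z x =
     (if k = 0 then (if m \<ge> 1 then QII p h I m z x else 0)
      else (\<Sum>n\<in>{1..<m}. \<Sum>\<^sub>\<infinity>y\<in>configs h. Uchain p h I k n z y * QII p h I (m - n) y x))"

definition absU :: "site pmf \<Rightarrow> real measure \<Rightarrow> real \<Rightarrow> nat \<Rightarrow> nat set set \<Rightarrow> nat \<Rightarrow> config \<Rightarrow> config \<Rightarrow> real" where
  "absU p \<mu> \<beta> h I m z x = (\<Sum>\<^sub>\<infinity>k\<in>{1..}. \<bar>xi_I \<mu> \<beta> I\<bar> ^ k * Uchain p h I k m z x)"

definition absUhat :: "site pmf \<Rightarrow> real measure \<Rightarrow> real \<Rightarrow> nat \<Rightarrow> nat set set \<Rightarrow> nat \<Rightarrow> real \<Rightarrow> config \<Rightarrow> config \<Rightarrow> real" where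
  "absUhat p \<mu> \<beta> h I L lam z x =
     (if z = x \<and> sim x I then 1 else 0) + (\<Sum>m=1..L. exp (- lam * real m) * absU p \<mu> \<beta> h I m z x)"

definition RL :: "site pmf \<Rightarrow> nat \<Rightarrow> real \<Rightarrow> real" where
  "RL p L lam = (\<Sum>n=1..L. exp (- lam * real n) * qn p (2 * n) 0)"

definition Wt :: "real \<Rightarrow> config \<Rightarrow> real" where
  "Wt t x = (\<Prod>i<length x. exp (- t * znorm (x ! i)))"

text \<open>V^J_s for the pair J = {{a,b}} \<union> {{c} : c \<noteq> a,b}\<close>
definition Vpair :: "real \<Rightarrow> nat \<Rightarrow> nat \<Rightarrow> config \<Rightarrow> real" where
  "Vpair s a b x = exp (- s * znorm (x ! a - x ! b))"

definition in_lq :: "real \<Rightarrow> 'a set \<Rightarrow> ('a \<Rightarrow> real) \<Rightarrow> bool" where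
  "in_lq q S f \<longleftrightarrow> (\<lambda>x. \<bar>f x\<bar> powr q) summable_on S"

definition lq_norm :: "real \<Rightarrow> 'a set \<Rightarrow> ('a \<Rightarrow> real) \<Rightarrow> real" where
  "lq_norm q S f = (\<Sum>\<^sub>\<infinity>x\<in>S. \<bar>f x\<bar> powr q) powr (1 / q)"

definition kernel_apply :: "'a set \<Rightarrow> ('a \<Rightarrow> 'a \<Rightarrow> real) \<Rightarrow> ('a \<Rightarrow> real) \<Rightarrow> 'a \<Rightarrow> real" where
  "kernel_apply S K f x = (\<Sum>\<^sub>\<infinity>y\<in>S. K x y * f y)"

definition lq_opnorm_le :: "real \<Rightarrow> 'a set \<Rightarrow> ('a \<Rightarrow> 'a \<Rightarrow> real) \<Rightarrow> real \<Rightarrow> bool" where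
  "lq_opnorm_le q S K C \<longleftrightarrow>
     (\<forall>f. in_lq q S f \<longrightarrow>
        (\<forall>x\<in>S. (\<lambda>y. \<bar>K x y * f y\<bar>) summable_on S) \<and>
        in_lq q S (kernel_apply S K f) \<and>
        lq_norm q S (kernel_apply S K f) \<le> C * lq_norm q S f)"

end

(*
  By the Schur test it suffices to bound the row and column sums of the (nonnegative) weighted
  kernel.  The weight ratio is at most prod_i exp(T |x^i - z^i|), and
  exp(T |v|) <= 1/2 sum_u exp(2T u.v) over the four unit vectors u of Z^2, so the weight is
  dominated by the average of 4^h exponential tilts, which are multiplicative along chains.
  Hence the tilted chains of |U| can be bounded one step at a time.  In a step of length n, a
  block of I containing a and b forces x^a = x^b, so the pair (a, b) contributes a tilted sum of
  q_n(v)^2, which cc2 bounds by exp(2 cc (2T)^2 n) q_2n(0); every other coordinate contributes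
  at most exp(cc (2T)^2 n / 2) by cc1.  Chains with k steps thus contribute at most
  (2 exp(4 cc T^2 L))^h (sigma2 R_L)^k, and summing the geometric series gives the bound.
*)
theory Submission
  imports Defs
begin

section \<open>Counting-measure sums and the Schur test\<close>

lemma nn_integral_count_space_eq_infsum:
  fixes f :: "'a \<Rightarrow> real"
  assumes "f summable_on A" "\<And>x. x \<in> A \<Longrightarrow> 0 \<le> f x"
  shows "(\<integral>\<^sup>+x. ennreal (f x) \<partial>count_space A) = ennreal (infsum f A)"
proof -
  have "(\<lambda>x. norm (f x)) summable_on A"
    using assms by (subst summable_on_cong[where g = f]) auto
  then have "Infinite_Set_Sum.abs_summable_on f A"
    using abs_summable_equivalent by blast
  then show ?thesis
    using assms nn_integral_conv_infsetsum infsetsum_infsum by metis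
qed

lemma ennreal_infsum_le_nn_integral:
  fixes f :: "'a \<Rightarrow> real"
  assumes "\<And>x. x \<in> A \<Longrightarrow> 0 \<le> f x"
  shows "ennreal (infsum f A) \<le> (\<integral>\<^sup>+x. ennreal (f x) \<partial>count_space A)"
proof (cases "f summable_on A")
  case True
  then show ?thesis using nn_integral_count_space_eq_infsum[OF True assms] by simp
qed (simp add: infsum_not_exists)

lemma summable_on_infsum_le_if_nn_integral_le:
  fixes f :: "'a \<Rightarrow> real"
  assumes f0: "\<And>x. x \<in> A \<Longrightarrow> 0 \<le> f x" and "0 \<le> C"
    and bound: "(\<integral>\<^sup>+x. ennreal (f x) \<partial>count_space A) \<le> ennreal C"
  shows "f summable_on A" and "infsum f A \<le> C"
proof -
  have "(\<integral>\<^sup>+x. ennreal (norm (f x)) \<partial>count_space A) < \<infinity>"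
    using f0 bound by (subst nn_integral_cong[where v = "\<lambda>x. ennreal (f x)"])
      (auto simp: le_less_trans)
  then have "integrable (count_space A) f"
    by (intro integrableI_bounded) simp_all
  then have "Infinite_Set_Sum.abs_summable_on f A"
    by (simp add: abs_summable_on_def)
  then have "(\<lambda>x. norm (f x)) summable_on A"
    using abs_summable_equivalent by blast
  then show sf: "f summable_on A"
    using f0 by (subst summable_on_cong[where g = "\<lambda>x. norm (f x)"]) auto
  show "infsum f A \<le> C"
    using nn_integral_count_space_eq_infsum[OF sf f0] bound \<open>0 \<le> C\<close> by simp
qed

lemma nn_integral_count_space_mono_set:
  assumes "A \<subseteq> B"
  shows "(\<integral>\<^sup>+x. f x \<partial>count_space A) \<le> (\<integral>\<^sup>+x. f x \<partial>count_space B)"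
proof -
  have "(\<integral>\<^sup>+x. f x \<partial>count_space A) = (\<integral>\<^sup>+x. f x * indicator A x \<partial>count_space A)"
    by (intro nn_integral_cong) simp
  also have "\<dots> = (\<integral>\<^sup>+x. f x * indicator A x \<partial>count_space B)"
    using assms by (intro nn_integral_count_space_eq) auto
  also have "\<dots> \<le> (\<integral>\<^sup>+x. f x \<partial>count_space B)"
    by (intro nn_integral_mono) (simp add: indicator_def)
  finally show ?thesis .
qed

text \<open>Row sums are taken as integrals over the counting measure in ennreal, so bounds on them
  carry no summability side conditions.\<close>
definition row_sums_le :: "'a set \<Rightarrow> ('a \<Rightarrow> 'a \<Rightarrow> real) \<Rightarrow> real \<Rightarrow> bool" where
  "row_sums_le S K c \<longleftrightarrow> 0 \<le> c \<and> (\<forall>z\<in>S. \<forall>x\<in>S. 0 \<le> K z x) \<and>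
     (\<forall>z\<in>S. (\<integral>\<^sup>+x. ennreal (K z x) \<partial>count_space S) \<le> ennreal c)"

definition row_col_sums_le :: "'a set \<Rightarrow> ('a \<Rightarrow> 'a \<Rightarrow> real) \<Rightarrow> real \<Rightarrow> bool" where
  "row_col_sums_le S K c \<longleftrightarrow> row_sums_le S K c \<and> row_sums_le S (\<lambda>x z. K z x) c"

definition kernel_comp :: "'a set \<Rightarrow> ('a \<Rightarrow> 'a \<Rightarrow> real) \<Rightarrow> ('a \<Rightarrow> 'a \<Rightarrow> real) \<Rightarrow> 'a \<Rightarrow> 'a \<Rightarrow> real" where
  "kernel_comp S K1 K2 z x = (\<Sum>\<^sub>\<infinity>y\<in>S. K1 z y * K2 y x)"

lemma row_sums_le_mono:
  assumes "row_sums_le S K' c" "c \<le> c'"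
    and "\<And>z x. z \<in> S \<Longrightarrow> x \<in> S \<Longrightarrow> 0 \<le> K z x"
    and "\<And>z x. z \<in> S \<Longrightarrow> x \<in> S \<Longrightarrow> K z x \<le> K' z x"
  shows "row_sums_le S K c'"
  unfolding row_sums_le_def
proof (intro conjI ballI)
  fix z assume z: "z \<in> S"
  have "(\<integral>\<^sup>+x. ennreal (K z x) \<partial>count_space S) \<le> (\<integral>\<^sup>+x. ennreal (K' z x) \<partial>count_space S)"
    using assms(4)[OF z] by (intro nn_integral_mono ennreal_leI) simp
  also have "\<dots> \<le> ennreal c'"
    using assms(1,2) z by (auto simp: row_sums_le_def intro: order_trans ennreal_leI)
  finally show "(\<integral>\<^sup>+x. ennreal (K z x) \<partial>count_space S) \<le> ennreal c'" .
qed (use assms in \<open>auto simp: row_sums_le_def\<close>)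

lemma row_sums_le_subset:
  assumes "row_sums_le S K c" "T \<subseteq> S"
  shows "row_sums_le T K c"
  using assms order_trans[OF nn_integral_count_space_mono_set[OF assms(2)]]
  unfolding row_sums_le_def by blast

lemma row_sums_le_zero: "row_sums_le S (\<lambda>z x. 0) 0"
  by (simp add: row_sums_le_def)

lemma row_sums_le_diag: "row_sums_le S (\<lambda>z x. if z = x then 1 else 0) 1"
proof -
  have "(\<integral>\<^sup>+x. ennreal (if z = x then 1 else 0) \<partial>count_space S) = 1" if "z \<in> S" for z
    using that by (subst nn_integral_count_space'[where A = "{z}"]) auto
  then show ?thesis by (simp add: row_sums_le_def)
qed

lemma row_sums_le_add:
  assumes "row_sums_le S K a" "row_sums_le S K' b"
  shows "row_sums_le S (\<lambda>z x. K z x + K' z x) (a + b)"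
  unfolding row_sums_le_def
proof (intro conjI ballI)
  fix z assume z: "z \<in> S"
  have "(\<integral>\<^sup>+x. ennreal (K z x + K' z x) \<partial>count_space S)
      = (\<integral>\<^sup>+x. ennreal (K z x) \<partial>count_space S) + (\<integral>\<^sup>+x. ennreal (K' z x) \<partial>count_space S)"
    using assms z by (subst nn_integral_add[symmetric])
      (auto intro!: nn_integral_cong ennreal_plus simp: row_sums_le_def)
  also have "\<dots> \<le> ennreal a + ennreal b"
    using assms z by (intro add_mono) (auto simp: row_sums_le_def)
  finally show "(\<integral>\<^sup>+x. ennreal (K z x + K' z x) \<partial>count_space S) \<le> ennreal (a + b)"
    using assms by (simp add: row_sums_le_def ennreal_plus)
qed (use assms in \<open>auto simp: row_sums_le_def\<close>)

lemma row_sums_le_sum: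
  assumes "finite J" "\<And>j. j \<in> J \<Longrightarrow> row_sums_le S (K j) (a j)"
  shows "row_sums_le S (\<lambda>z x. \<Sum>j\<in>J. K j z x) (\<Sum>j\<in>J. a j)"
  using assms by (induction J rule: finite_induct) (simp_all add: row_sums_le_zero row_sums_le_add)

lemma row_sums_le_cmult:
  assumes "row_sums_le S K a" "0 \<le> c"
  shows "row_sums_le S (\<lambda>z x. c * K z x) (c * a)"
  unfolding row_sums_le_def
proof (intro conjI ballI)
  fix z assume z: "z \<in> S"
  have "(\<integral>\<^sup>+x. ennreal (c * K z x) \<partial>count_space S) = ennreal c * (\<integral>\<^sup>+x. ennreal (K z x) \<partial>count_space S)"
    using assms z by (subst nn_integral_cmult[symmetric])
      (auto intro!: nn_integral_cong ennreal_mult simp: row_sums_le_def)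
  also have "\<dots> \<le> ennreal c * ennreal a"
    using assms z by (intro mult_left_mono) (auto simp: row_sums_le_def)
  finally show "(\<integral>\<^sup>+x. ennreal (c * K z x) \<partial>count_space S) \<le> ennreal (c * a)"
    using assms by (simp add: ennreal_mult row_sums_le_def)
qed (use assms in \<open>auto simp: row_sums_le_def\<close>)

lemma row_sums_le_comp:
  assumes "countable S" and K1: "row_sums_le S K1 a" and K2: "row_sums_le S K2 b"
  shows "row_sums_le S (kernel_comp S K1 K2) (a * b)"
proof -
  have K0: "0 \<le> K1 z y" "0 \<le> K2 y x" if "z \<in> S" "y \<in> S" "x \<in> S" for z y x
    using K1 K2 that by (auto simp: row_sums_le_def)
  have "(\<integral>\<^sup>+x. ennreal (kernel_comp S K1 K2 z x) \<partial>count_space S) \<le> ennreal (a * b)"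
    if z: "z \<in> S" for z
  proof -
    have "(\<integral>\<^sup>+x. ennreal (kernel_comp S K1 K2 z x) \<partial>count_space S)
        \<le> (\<integral>\<^sup>+x. \<integral>\<^sup>+y. ennreal (K1 z y) * ennreal (K2 y x) \<partial>count_space S \<partial>count_space S)"
      unfolding kernel_comp_def using K0 z
      by (intro nn_integral_mono order_trans[OF ennreal_infsum_le_nn_integral])
        (auto intro!: nn_integral_mono simp: ennreal_mult)
    also have "\<dots> = (\<integral>\<^sup>+y. ennreal (K1 z y) * (\<integral>\<^sup>+x. ennreal (K2 y x) \<partial>count_space S) \<partial>count_space S)"
      using \<open>countable S\<close>
      by (subst nn_integral_count_space_nn_integral) (simp_all add: nn_integral_cmult)
    also have "\<dots> \<le> (\<integral>\<^sup>+y. ennreal (K1 z y) * ennreal b \<partial>count_space S)"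
      using K2 by (intro nn_integral_mono mult_left_mono) (auto simp: row_sums_le_def)
    also have "\<dots> \<le> ennreal a * ennreal b"
      using K1 z by (subst nn_integral_multc) (auto intro: mult_right_mono simp: row_sums_le_def)
    finally show ?thesis
      using K1 K2 by (simp add: ennreal_mult row_sums_le_def)
  qed
  moreover have "0 \<le> kernel_comp S K1 K2 z x" if "z \<in> S" "x \<in> S" for z x
    using K0 that by (auto simp: kernel_comp_def intro!: infsum_nonneg)
  ultimately show ?thesis
    using K1 K2 by (simp add: row_sums_le_def)
qed

lemma kernel_comp_transpose:
  "(\<lambda>x z. kernel_comp S K1 K2 z x) = kernel_comp S (\<lambda>y x. K2 x y) (\<lambda>z y. K1 y z)"
  by (intro ext) (simp add: kernel_comp_def mult.commute)

lemma kernel_comp_mult_cocycle: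
  assumes "\<And>z y x. E z x = E z y * E y x"
  shows "(\<lambda>z x. E z x * kernel_comp S K1 K2 z x) = kernel_comp S (\<lambda>z y. E z y * K1 z y) (\<lambda>y x. E y x * K2 y x)"
  unfolding kernel_comp_def infsum_cmult_right'[symmetric]
  by (intro ext infsum_cong) (simp add: assms[of _ _ _] mult_ac)

lemma row_col_sums_le_mono:
  assumes "row_col_sums_le S K' c" "c \<le> c'"
    and "\<And>z x. z \<in> S \<Longrightarrow> x \<in> S \<Longrightarrow> 0 \<le> K z x"
    and "\<And>z x. z \<in> S \<Longrightarrow> x \<in> S \<Longrightarrow> K z x \<le> K' z x"
  shows "row_col_sums_le S K c'"
  using assms unfolding row_col_sums_le_def by (auto intro: row_sums_le_mono)

lemma row_col_sums_le_subset:
  "row_col_sums_le S K c \<Longrightarrow> T \<subseteq> S \<Longrightarrow> row_col_sums_le T K c"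
  unfolding row_col_sums_le_def by (auto intro: row_sums_le_subset)

lemma row_col_sums_le_zero: "row_col_sums_le S (\<lambda>z x. 0) 0"
  by (simp add: row_col_sums_le_def row_sums_le_zero)

lemma row_col_sums_le_diag: "row_col_sums_le S (\<lambda>z x. if z = x then 1 else 0) 1"
  using row_sums_le_diag[of S] by (simp add: row_col_sums_le_def eq_commute)

lemma row_col_sums_le_add:
  "row_col_sums_le S K a \<Longrightarrow> row_col_sums_le S K' b \<Longrightarrow>
    row_col_sums_le S (\<lambda>z x. K z x + K' z x) (a + b)"
  unfolding row_col_sums_le_def by (auto intro: row_sums_le_add)

lemma row_col_sums_le_sum:
  "finite J \<Longrightarrow> (\<And>j. j \<in> J \<Longrightarrow> row_col_sums_le S (K j) (a j)) \<Longrightarrow>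
    row_col_sums_le S (\<lambda>z x. \<Sum>j\<in>J. K j z x) (\<Sum>j\<in>J. a j)"
  unfolding row_col_sums_le_def
  using row_sums_le_sum[of J S K a] row_sums_le_sum[of J S "\<lambda>j x z. K j z x" a] by auto

lemma row_col_sums_le_cmult:
  "row_col_sums_le S K a \<Longrightarrow> 0 \<le> c \<Longrightarrow> row_col_sums_le S (\<lambda>z x. c * K z x) (c * a)"
  unfolding row_col_sums_le_def by (auto intro: row_sums_le_cmult)

lemma row_col_sums_le_comp:
  assumes "countable S" "row_col_sums_le S K1 a" "row_col_sums_le S K2 b"
  shows "row_col_sums_le S (kernel_comp S K1 K2) (a * b)"
  using assms row_sums_le_comp[OF assms(1), of "\<lambda>y x. K2 x y" b "\<lambda>z y. K1 y z" a]
  unfolding row_col_sums_le_def kernel_comp_transpose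
  by (auto intro: row_sums_le_comp simp: mult.commute)

lemma Youngs_inequality_conjugate:
  fixes a u q :: real
  assumes q: "1 < q" and "0 \<le> a" "0 < u"
  shows "a * u powr (q - 1) \<le> a powr q / q + u powr q * ((q - 1) / q)"
proof -
  have q': "q / (q - 1) > 1" "1 / q + 1 / (q / (q - 1)) = 1"
    using q by (simp_all add: field_simps)
  have "a * u powr (q - 1) \<le> a powr q / q + (u powr (q - 1)) powr (q / (q - 1)) / (q / (q - 1))"
    using Youngs_inequality[OF q q' \<open>0 \<le> a\<close>] \<open>0 < u\<close> by simp
  also have "(u powr (q - 1)) powr (q / (q - 1)) = u powr q"
    using q by (simp add: powr_powr)
  finally show ?thesis by simp
qed

lemma infsum_weighted_Young:
  fixes k g :: "'a \<Rightarrow> real"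
  assumes q: "1 < q" and u: "0 < u"
    and k0: "\<And>y. y \<in> S \<Longrightarrow> 0 \<le> k y" and g0: "\<And>y. y \<in> S \<Longrightarrow> 0 \<le> g y"
    and ks: "k summable_on S" and kA: "infsum k S \<le> A"
    and kg: "(\<lambda>y. k y * g y) summable_on S" and kgq: "(\<lambda>y. k y * g y powr q) summable_on S"
  shows "(\<Sum>\<^sub>\<infinity>y\<in>S. k y * g y) * u powr (q - 1)
      \<le> (\<Sum>\<^sub>\<infinity>y\<in>S. k y * g y powr q) / q + A * (u powr q * ((q - 1) / q))"
proof -
  have "(\<Sum>\<^sub>\<infinity>y\<in>S. k y * g y) * u powr (q - 1) = (\<Sum>\<^sub>\<infinity>y\<in>S. k y * (g y * u powr (q - 1)))"
    by (simp add: infsum_cmult_left'[symmetric] mult.assoc)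
  also have "\<dots> \<le> (\<Sum>\<^sub>\<infinity>y\<in>S. k y * g y powr q / q + k y * (u powr q * ((q - 1) / q)))"
  proof (rule infsum_mono)
    show "(\<lambda>y. k y * (g y * u powr (q - 1))) summable_on S"
      using summable_on_cmult_left[OF kg, of "u powr (q - 1)"] by (simp add: mult.assoc)
    show "(\<lambda>y. k y * g y powr q / q + k y * (u powr q * ((q - 1) / q))) summable_on S"
      using summable_on_cmult_left[OF kgq, of "inverse q"] summable_on_cmult_left[OF ks]
      by (intro summable_on_add) (auto simp: divide_inverse)
    show "k y * (g y * u powr (q - 1)) \<le> k y * g y powr q / q + k y * (u powr q * ((q - 1) / q))"
      if "y \<in> S" for y
      using mult_left_mono[OF Youngs_inequality_conjugate[OF q g0[OF that] u] k0[OF that]]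
      by (simp add: algebra_simps)
  qed
  also have "\<dots> = (\<Sum>\<^sub>\<infinity>y\<in>S. k y * g y powr q) / q + infsum k S * (u powr q * ((q - 1) / q))"
    using kgq ks
    by (subst infsum_add) (auto simp: infsum_cmult_left' divide_inverse intro: summable_on_cmult_left)
  also have "\<dots> \<le> (\<Sum>\<^sub>\<infinity>y\<in>S. k y * g y powr q) / q + A * (u powr q * ((q - 1) / q))"
    using kA q u by (intro add_left_mono mult_right_mono) auto
  finally show ?thesis .
qed

text \<open>Jensen's inequality for the convex function t \<mapsto> t powr q and the weights k / A.\<close>
lemma infsum_weighted_powr_le:
  fixes k g :: "'a \<Rightarrow> real"
  assumes q: "1 < q" and k0: "\<And>y. y \<in> S \<Longrightarrow> 0 \<le> k y" and g0: "\<And>y. y \<in> S \<Longrightarrow> 0 \<le> g y"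
    and ks: "k summable_on S" and kA: "infsum k S \<le> A"
    and kg: "(\<lambda>y. k y * g y) summable_on S" and kgq: "(\<lambda>y. k y * g y powr q) summable_on S"
  shows "(\<Sum>\<^sub>\<infinity>y\<in>S. k y * g y) powr q \<le> A powr (q - 1) * (\<Sum>\<^sub>\<infinity>y\<in>S. k y * g y powr q)"
proof -
  define G where "G = (\<Sum>\<^sub>\<infinity>y\<in>S. k y * g y)"
  define H where "H = (\<Sum>\<^sub>\<infinity>y\<in>S. k y * g y powr q)"
  have "0 \<le> G" "0 \<le> H"
    unfolding G_def H_def using k0 g0 by (auto intro!: infsum_nonneg)
  show ?thesis
  proof (cases "G = 0")
    case False
    with \<open>0 \<le> G\<close> have "0 < G" by simp
    have "0 < A"
    proof (rule ccontr)
      assume "\<not> 0 < A"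
      then have "k y = 0" if "y \<in> S" for y
        using infsum_mono2[of k "{y}" S] ks that k0 kA by force
      then have "G = 0" unfolding G_def by (simp add: infsum_0)
      with False show False ..
    qed
    define X where "X = G powr q / A powr (q - 1)"
    \<comment> \<open>Young's inequality at u = G / A, where both of its sides are multiples of X\<close>
    have "G * (G / A) powr (q - 1) \<le> H / q + A * ((G / A) powr q * ((q - 1) / q))"
      using infsum_weighted_Young[OF q _ k0 g0 ks kA kg kgq, of "G / A"] \<open>0 < G\<close> \<open>0 < A\<close>
      by (simp add: G_def H_def)
    moreover have "G * (G / A) powr (q - 1) = X" "A * (G / A) powr q = X"
      using \<open>0 < G\<close> \<open>0 < A\<close> by (simp_all add: X_def powr_divide powr_diff)
    ultimately have "X \<le> H / q + X * ((q - 1) / q)"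
      by (simp add: mult.assoc[symmetric])
    then have "X * q \<le> H + X * (q - 1)"
      using q by (simp add: field_simps)
    then have "X \<le> H"
      by (simp add: algebra_simps)
    then show ?thesis
      using \<open>0 < A\<close> by (simp add: X_def G_def H_def field_simps)
  qed (use \<open>0 \<le> H\<close> in \<open>simp add: G_def H_def\<close>)
qed

lemma row_sums_le_summable:
  assumes q: "1 < q" and K: "row_sums_le S K A" and f: "in_lq q S f" and z: "z \<in> S"
  shows "K z summable_on S" "infsum (K z) S \<le> A"
    "(\<lambda>y. K z y * \<bar>f y\<bar> powr q) summable_on S" "(\<lambda>y. K z y * \<bar>f y\<bar>) summable_on S"
proof -
  have A0: "0 \<le> A" and K0: "\<And>x. x \<in> S \<Longrightarrow> 0 \<le> K z x"
    and row: "(\<integral>\<^sup>+x. ennreal (K z x) \<partial>count_space S) \<le> ennreal A"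
    using K z by (auto simp: row_sums_le_def)
  show Ks: "K z summable_on S" and "infsum (K z) S \<le> A"
    using summable_on_infsum_le_if_nn_integral_le[OF _ A0 row] K0 by auto
  have KA: "K z x \<le> A" if "x \<in> S" for x
    using order_trans[OF nn_integral_ge_point[OF that] row] A0 by simp
  have Fs: "(\<lambda>y. \<bar>f y\<bar> powr q) summable_on S"
    using f by (simp add: in_lq_def)
  show KF: "(\<lambda>y. K z y * \<bar>f y\<bar> powr q) summable_on S"
    by (rule summable_on_comparison_test[OF summable_on_cmult_right[OF Fs, of A]])
      (use KA K0 in \<open>auto intro: mult_right_mono\<close>)
  show "(\<lambda>y. K z y * \<bar>f y\<bar>) summable_on S"
  proof (rule summable_on_comparison_test[OF summable_on_add[OF Ks KF]])
    fix y assume "y \<in> S"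
    have "\<bar>f y\<bar> \<le> 1 + \<bar>f y\<bar> powr q"
    proof (cases "\<bar>f y\<bar> \<le> 1")
      case False
      then have "\<bar>f y\<bar> powr 1 \<le> \<bar>f y\<bar> powr q" using q by (intro powr_mono) auto
      then show ?thesis by simp
    qed (simp add: add_increasing2)
    then show "K z y * \<bar>f y\<bar> \<le> K z y + K z y * \<bar>f y\<bar> powr q"
      using mult_left_mono[OF _ K0[OF \<open>y \<in> S\<close>]] by (metis distrib_left mult.right_neutral)
  qed (use K0 in auto)
qed

lemma kernel_apply_powr_le:
  assumes q: "1 < q" and K: "row_sums_le S K A" and f: "in_lq q S f" and z: "z \<in> S"
  shows "\<bar>kernel_apply S K f z\<bar> powr q \<le> A powr (q - 1) * (\<Sum>\<^sub>\<infinity>y\<in>S. K z y * \<bar>f y\<bar> powr q)"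
proof -
  have K0: "\<And>y. y \<in> S \<Longrightarrow> 0 \<le> K z y"
    using K z by (auto simp: row_sums_le_def)
  note sums = row_sums_le_summable[OF q K f z]
  have "\<bar>kernel_apply S K f z\<bar> \<le> (\<Sum>\<^sub>\<infinity>y\<in>S. \<bar>K z y * f y\<bar>)"
    unfolding kernel_apply_def using norm_infsum_bound[of "\<lambda>y. K z y * f y" S] sums(4) K0
    by (simp add: abs_mult summable_on_cong[of S "\<lambda>y. \<bar>K z y\<bar> * \<bar>f y\<bar>" "\<lambda>y. K z y * \<bar>f y\<bar>"])
  also have "\<dots> = (\<Sum>\<^sub>\<infinity>y\<in>S. K z y * \<bar>f y\<bar>)"
    using K0 by (intro infsum_cong) (simp add: abs_mult)
  finally have "\<bar>kernel_apply S K f z\<bar> powr q \<le> (\<Sum>\<^sub>\<infinity>y\<in>S. K z y * \<bar>f y\<bar>) powr q"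
    using q by (intro powr_mono2) auto
  also have "\<dots> \<le> A powr (q - 1) * (\<Sum>\<^sub>\<infinity>y\<in>S. K z y * \<bar>f y\<bar> powr q)"
    using K0 sums q by (intro infsum_weighted_powr_le) auto
  finally show ?thesis .
qed

lemma nn_integral_kernel_apply_powr_le:
  assumes q: "1 < q" and "countable S" and K: "row_col_sums_le S K A" and f: "in_lq q S f"
  shows "(\<integral>\<^sup>+z. ennreal (\<bar>kernel_apply S K f z\<bar> powr q) \<partial>count_space S)
      \<le> ennreal (A powr q * (\<Sum>\<^sub>\<infinity>y\<in>S. \<bar>f y\<bar> powr q))"
proof -
  define F where "F y = \<bar>f y\<bar> powr q" for y
  have Fs: "F summable_on S" using f by (simp add: in_lq_def F_def[abs_def])
  have F0: "0 \<le> F y" for y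
    by (simp add: F_def)
  have rows: "row_sums_le S K A" and A0: "0 \<le> A" and K0: "\<And>z x. z \<in> S \<Longrightarrow> x \<in> S \<Longrightarrow> 0 \<le> K z x"
    and col: "\<And>x. x \<in> S \<Longrightarrow> (\<integral>\<^sup>+z. ennreal (K z x) \<partial>count_space S) \<le> ennreal A"
    using K by (auto simp: row_col_sums_le_def row_sums_le_def)
  \<comment> \<open>Summing the rowwise Jensen bound over z and exchanging the sums brings in the column sums.\<close>
  have "(\<integral>\<^sup>+z. ennreal (\<bar>kernel_apply S K f z\<bar> powr q) \<partial>count_space S)
      \<le> (\<integral>\<^sup>+z. ennreal (A powr (q - 1)) * (\<integral>\<^sup>+y. ennreal (K z y) * ennreal (F y) \<partial>count_space S) \<partial>count_space S)"
  proof (intro nn_integral_mono)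
    fix z assume "z \<in> space (count_space S)"
    then have z: "z \<in> S" by simp
    have "ennreal (\<Sum>\<^sub>\<infinity>y\<in>S. K z y * F y) = (\<integral>\<^sup>+y. ennreal (K z y) * ennreal (F y) \<partial>count_space S)"
      using K0[OF z] F0
      by (subst nn_integral_count_space_eq_infsum[OF row_sums_le_summable(3)[OF q rows f z, folded F_def], symmetric])
        (auto simp: ennreal_mult intro!: nn_integral_cong)
    moreover have "0 \<le> (\<Sum>\<^sub>\<infinity>y\<in>S. K z y * F y)"
      using K0[OF z] F0 by (intro infsum_nonneg) auto
    ultimately show "ennreal (\<bar>kernel_apply S K f z\<bar> powr q)
        \<le> ennreal (A powr (q - 1)) * (\<integral>\<^sup>+y. ennreal (K z y) * ennreal (F y) \<partial>count_space S)"
      using ennreal_leI[OF kernel_apply_powr_le[OF q rows f z, folded F_def]] by (simp add: ennreal_mult)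
  qed
  also have "\<dots> = ennreal (A powr (q - 1)) *
      (\<integral>\<^sup>+y. (\<integral>\<^sup>+z. ennreal (K z y) \<partial>count_space S) * ennreal (F y) \<partial>count_space S)"
    using \<open>countable S\<close>
    by (simp add: nn_integral_cmult nn_integral_multc nn_integral_count_space_nn_integral)
  also have "\<dots> \<le> ennreal (A powr (q - 1)) * (\<integral>\<^sup>+y. ennreal A * ennreal (F y) \<partial>count_space S)"
    using col by (intro mult_left_mono nn_integral_mono mult_right_mono) auto
  also have "\<dots> = ennreal (A powr (q - 1) * A * infsum F S)"
    using nn_integral_count_space_eq_infsum[OF Fs] F0 A0 infsum_nonneg[of S F]
    by (simp add: nn_integral_cmult ennreal_mult mult.assoc)
  also have "A powr (q - 1) * A = A powr q"
    using A0 q by (cases "A = 0") (simp_all add: powr_diff)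
  finally show ?thesis
    by (simp add: F_def[abs_def])
qed

lemma Schur_test:
  fixes K :: "'a \<Rightarrow> 'a \<Rightarrow> real"
  assumes q: "1 < q" and "countable S" and K: "row_col_sums_le S K A"
  shows "lq_opnorm_le q S K A"
  unfolding lq_opnorm_le_def
proof (intro allI impI conjI ballI)
  fix f assume f: "in_lq q S f"
  have rows: "row_sums_le S K A" and A0: "0 \<le> A" and K0: "\<And>z x. z \<in> S \<Longrightarrow> x \<in> S \<Longrightarrow> 0 \<le> K z x"
    using K by (auto simp: row_col_sums_le_def row_sums_le_def)
  show "(\<lambda>y. \<bar>K z y * f y\<bar>) summable_on S" if "z \<in> S" for z
    using row_sums_le_summable(4)[OF q rows f that] K0[OF that]
    by (subst summable_on_cong[where g = "\<lambda>y. K z y * \<bar>f y\<bar>"]) (auto simp: abs_mult)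
  have "0 \<le> (\<Sum>\<^sub>\<infinity>y\<in>S. \<bar>f y\<bar> powr q)"
    by (intro infsum_nonneg) simp
  note lq = summable_on_infsum_le_if_nn_integral_le[OF _ _ nn_integral_kernel_apply_powr_le[OF q \<open>countable S\<close> K f]]
  show "in_lq q S (kernel_apply S K f)"
    using lq A0 \<open>0 \<le> (\<Sum>\<^sub>\<infinity>y\<in>S. \<bar>f y\<bar> powr q)\<close> by (simp add: in_lq_def)
  have "lq_norm q S (kernel_apply S K f) \<le> (A powr q * (\<Sum>\<^sub>\<infinity>y\<in>S. \<bar>f y\<bar> powr q)) powr (1 / q)"
    unfolding lq_norm_def using lq A0 \<open>0 \<le> (\<Sum>\<^sub>\<infinity>y\<in>S. \<bar>f y\<bar> powr q)\<close> q
    by (intro powr_mono2) (auto intro: infsum_nonneg)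
  also have "\<dots> = A * lq_norm q S f"
    using A0 \<open>0 \<le> (\<Sum>\<^sub>\<infinity>y\<in>S. \<bar>f y\<bar> powr q)\<close> q by (simp add: lq_norm_def powr_mult powr_powr)
  finally show "lq_norm q S (kernel_apply S K f) \<le> A * lq_norm q S f" .
qed

section \<open>Convolution powers\<close>

text \<open>conv_pow a k m is the sum, over 0 = n_0 < n_1 < ... < n_k = m, of the products
  of the a (n_i - n_(i-1)); it is defined by the same recursion as Uchain.\<close>
primrec conv_pow :: "(nat \<Rightarrow> real) \<Rightarrow> nat \<Rightarrow> nat \<Rightarrow> real" where
  "conv_pow a 0 m = 0"
| "conv_pow a (Suc k) m =
     (if k = 0 then (if 1 \<le> m then a m else 0) else (\<Sum>n\<in>{1..<m}. conv_pow a k n * a (m - n)))"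

lemma conv_pow_nonneg: "(\<And>n. 0 \<le> a n) \<Longrightarrow> 0 \<le> conv_pow a k m"
  by (induction k arbitrary: m) (auto intro!: sum_nonneg)

lemma conv_pow_eq_0: "m < k \<Longrightarrow> conv_pow a k m = 0"
  by (induction k arbitrary: m) auto

lemma conv_pow_exp_mult:
  "conv_pow (\<lambda>n. exp (c * real n) * a n) k m = exp (c * real m) * conv_pow a k m"
proof (induction k arbitrary: m)
  case (Suc k)
  have "exp (c * real n) * conv_pow a k n * (exp (c * real (m - n)) * a (m - n))
      = exp (c * real m) * (conv_pow a k n * a (m - n))" if "n \<in> {1..<m}" for n
  proof -
    have "exp (c * real n) * exp (c * real (m - n)) = exp (c * real m)"
      using that by (simp add: exp_add[symmetric] of_nat_diff algebra_simps)
    then show ?thesis by (metis mult.assoc mult.left_commute)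
  qed
  then have "(\<Sum>n\<in>{1..<m}. conv_pow (\<lambda>n. exp (c * real n) * a n) k n * (exp (c * real (m - n)) * a (m - n)))
      = exp (c * real m) * (\<Sum>n\<in>{1..<m}. conv_pow a k n * a (m - n))"
    unfolding Suc sum_distrib_left by (rule sum.cong[OF refl])
  then show ?case by simp
qed simp

lemma sum_convolution_le:
  fixes a b :: "nat \<Rightarrow> real"
  assumes a0: "\<And>n. 0 \<le> a n" and b0: "\<And>n. 0 \<le> b n"
  shows "(\<Sum>m=1..L. \<Sum>n\<in>{1..<m}. a n * b (m - n)) \<le> (\<Sum>n=1..L. a n) * (\<Sum>d=1..L. b d)"
proof -
  have "(\<Sum>m=1..L. \<Sum>n\<in>{1..<m}. a n * b (m - n)) = (\<Sum>n=1..L. \<Sum>m\<in>{m\<in>{1..L}. n < m}. a n * b (m - n))"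
    by (subst sum.swap_restrict[symmetric]) (auto intro!: sum.cong)
  also have "\<dots> \<le> (\<Sum>n=1..L. a n * (\<Sum>d=1..L. b d))"
  proof (intro sum_mono)
    fix n assume "n \<in> {1..L}"
    have "(\<Sum>m\<in>{m\<in>{1..L}. n < m}. b (m - n)) = (\<Sum>d\<in>(\<lambda>m. m - n) ` {m\<in>{1..L}. n < m}. b d)"
      by (subst sum.reindex) (auto simp: inj_on_def)
    also have "\<dots> \<le> (\<Sum>d=1..L. b d)"
      using b0 by (intro sum_mono2) auto
    finally show "(\<Sum>m\<in>{m\<in>{1..L}. n < m}. a n * b (m - n)) \<le> a n * (\<Sum>d=1..L. b d)"
      using a0[of n] by (simp add: sum_distrib_left[symmetric] mult_left_mono)
  qed
  finally show ?thesis by (simp add: sum_distrib_right)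
qed

lemma sum_conv_pow_le:
  assumes "\<And>n. 0 \<le> a n" "1 \<le> k"
  shows "(\<Sum>m=1..L. conv_pow a k m) \<le> (\<Sum>m=1..L. a m) ^ k"
  using assms(2)
proof (induction k)
  case (Suc k)
  show ?case
  proof (cases "k = 0")
    case False
    then have "(\<Sum>m=1..L. conv_pow a (Suc k) m) = (\<Sum>m=1..L. \<Sum>n\<in>{1..<m}. conv_pow a k n * a (m - n))"
      by simp
    also have "\<dots> \<le> (\<Sum>n=1..L. conv_pow a k n) * (\<Sum>d=1..L. a d)"
      using assms(1) by (intro sum_convolution_le conv_pow_nonneg)
    also have "\<dots> \<le> (\<Sum>m=1..L. a m) ^ k * (\<Sum>d=1..L. a d)"
      using Suc.IH False assms(1) by (intro mult_right_mono sum_nonneg) auto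
    finally show ?thesis by (simp add: mult.commute)
  qed simp
qed simp

lemma sum_power_le_geometric:
  fixes x :: real
  assumes "0 \<le> x" "x < 1"
  shows "(\<Sum>k=1..L. x ^ k) \<le> x / (1 - x)"
  using assms by (auto simp: sum_gp intro!: divide_right_mono)

lemma sum_sum_conv_pow_le:
  assumes a0: "\<And>n. 0 \<le> a n" and s0: "0 \<le> s" and small: "s * (\<Sum>n=1..L. a n) < 1"
  shows "(\<Sum>m=1..L. \<Sum>k=1..m. s ^ k * conv_pow a k m)
      \<le> s * (\<Sum>n=1..L. a n) / (1 - s * (\<Sum>n=1..L. a n))"
proof -
  let ?R = "\<Sum>n=1..L. a n"
  have "(\<Sum>m=1..L. \<Sum>k=1..m. s ^ k * conv_pow a k m) = (\<Sum>m=1..L. \<Sum>k=1..L. s ^ k * conv_pow a k m)"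
    by (intro sum.cong refl sum.mono_neutral_left) (auto simp: conv_pow_eq_0)
  also have "\<dots> = (\<Sum>k=1..L. s ^ k * (\<Sum>m=1..L. conv_pow a k m))"
    by (subst sum.swap) (simp add: sum_distrib_left)
  also have "\<dots> \<le> (\<Sum>k=1..L. s ^ k * ?R ^ k)"
    using s0 by (intro sum_mono mult_left_mono sum_conv_pow_le a0) auto
  also have "\<dots> = (\<Sum>k=1..L. (s * ?R) ^ k)"
    by (simp add: power_mult_distrib)
  also have "\<dots> \<le> s * ?R / (1 - s * ?R)"
    using s0 a0 small by (intro sum_power_le_geometric mult_nonneg_nonneg sum_nonneg) auto
  finally show ?thesis .
qed

lemma sum_weighted_conv_pow_le:
  fixes q :: "nat \<Rightarrow> real"
  assumes q0: "\<And>n. 0 \<le> q n" and \<sigma>0: "0 \<le> \<sigma>" and G0: "0 \<le> G"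
    and small: "\<sigma> * (\<Sum>n=1..L. exp (- lam * real n) * q n) < 1"
  shows "(\<Sum>m=1..L. \<Sum>k=1..m. exp (- lam * real m) * \<sigma> ^ k * conv_pow (\<lambda>n. exp (G * real n) * q n) k m)
      \<le> exp (G * real L) * (\<sigma> * (\<Sum>n=1..L. exp (- lam * real n) * q n)
          / (1 - \<sigma> * (\<Sum>n=1..L. exp (- lam * real n) * q n)))"
proof -
  let ?a = "\<lambda>n. exp (- lam * real n) * q n"
  have "(\<Sum>m=1..L. \<Sum>k=1..m. exp (- lam * real m) * \<sigma> ^ k * conv_pow (\<lambda>n. exp (G * real n) * q n) k m)
      = (\<Sum>m=1..L. \<Sum>k=1..m. exp (G * real m) * (\<sigma> ^ k * conv_pow ?a k m))"
    by (simp only: conv_pow_exp_mult) (simp add: mult_ac)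
  also have "\<dots> \<le> (\<Sum>m=1..L. \<Sum>k=1..m. exp (G * real L) * (\<sigma> ^ k * conv_pow ?a k m))"
    using G0 \<sigma>0 q0 conv_pow_nonneg[of "\<lambda>n. exp (- lam * real n) * q n"]
    by (intro sum_mono mult_right_mono) (auto intro: mult_left_mono)
  also have "\<dots> \<le> exp (G * real L) * (\<sigma> * (\<Sum>n=1..L. ?a n) / (1 - \<sigma> * (\<Sum>n=1..L. ?a n)))"
    unfolding sum_distrib_left[symmetric] using q0 \<sigma>0 small
    by (intro mult_left_mono sum_sum_conv_pow_le) auto
  finally show ?thesis .
qed

section \<open>Random walk and exponential tilts\<close>

lemma qn_nonneg: "0 \<le> qn p n x"
  by (simp add: qn_def)

lemma walk_uminus:
  assumes symm: "\<And>x. pmf p x = pmf p (- x)"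
  shows "map_pmf uminus (walk p n) = walk p n"
proof -
  have p: "map_pmf uminus p = p"
  proof (rule pmf_eqI)
    fix x :: site
    have "pmf (map_pmf uminus p) x = pmf (map_pmf uminus p) (- (- x))" by simp
    also have "\<dots> = pmf p (- x)" by (rule pmf_map_inj') (simp add: inj_def)
    finally show "pmf (map_pmf uminus p) x = pmf p x" using symm[of x] by simp
  qed
  show ?thesis
  proof (induction n)
    case (Suc n)
    have "map_pmf uminus (walk p (Suc n)) = bind_pmf (walk p n) (\<lambda>x. map_pmf (\<lambda>y. - (x + y)) p)"
      by (simp add: map_bind_pmf map_pmf_comp)
    also have "\<dots> = bind_pmf (walk p n) (\<lambda>x. map_pmf (\<lambda>y. - x + y) (map_pmf uminus p))"
    proof (intro bind_pmf_cong refl)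
      fix x :: site
      have "(\<lambda>y::site. - (x + y)) = (\<lambda>y. - x + y) \<circ> uminus"
        by (rule ext) (simp add: minus_add)
      then show "map_pmf (\<lambda>y. - (x + y)) p = map_pmf (\<lambda>y. - x + y) (map_pmf uminus p)"
        by (simp add: map_pmf_comp)
    qed
    also have "\<dots> = bind_pmf (map_pmf uminus (walk p n)) (\<lambda>x. map_pmf (\<lambda>y. x + y) p)"
      by (simp only: p bind_map_pmf o_def)
    also have "\<dots> = walk p (Suc n)" using Suc by simp
    finally show ?case .
  qed simp
qed

lemma qn_uminus:
  assumes "\<And>x. pmf p x = pmf p (- x)"
  shows "qn p n (- x) = qn p n x"
proof -
  have "qn p n x = pmf (map_pmf uminus (walk p n)) (- x)"
    by (subst pmf_map_inj') (auto simp: inj_def qn_def)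
  then show ?thesis using walk_uminus[OF assms] by (simp add: qn_def)
qed

lemma walk_add: "walk p (m + n) = bind_pmf (walk p m) (\<lambda>x. map_pmf (\<lambda>y. x + y) (walk p n))"
proof (induction n)
  case 0 then show ?case by (simp add: bind_return_pmf')
next
  case (Suc n)
  have "walk p (m + Suc n) = bind_pmf (walk p m) (\<lambda>x. bind_pmf (walk p n) (\<lambda>w. map_pmf (\<lambda>y. x + w + y) p))"
    by (simp add: Suc bind_assoc_pmf bind_map_pmf)
  also have "\<dots> = bind_pmf (walk p m) (\<lambda>x. map_pmf (\<lambda>y. x + y) (walk p (Suc n)))"
    by (simp add: map_bind_pmf map_pmf_comp add.assoc)
  finally show ?case .
qed

lemma qn_double_zero_pos:
  assumes "\<And>x. pmf p x = pmf p (- x)"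
  shows "0 < qn p (2 * n) 0"
proof -
  obtain x where x: "x \<in> set_pmf (walk p n)" using set_pmf_not_empty by fast
  then have "- x \<in> set_pmf (walk p n)"
    using walk_uminus[OF assms, of n] by (metis imageI set_map_pmf)
  then have "0 \<in> set_pmf (walk p (n + n))"
    using x by (auto simp: walk_add intro!: bexI[of _ x] image_eqI[of 0 _ "- x"])
  then show ?thesis by (simp add: qn_def mult_2 pmf_positive_iff)
qed

lemma znorm_eq_norm: "znorm v = norm (real_of_int (fst v), real_of_int (snd v))"
  by (simp add: znorm_def norm_Pair)

lemma znorm_nonneg: "0 \<le> znorm v"
  by (simp add: znorm_def)

lemma znorm_diff_le: "\<bar>znorm x - znorm z\<bar> \<le> znorm (x - z)"
  unfolding znorm_eq_norm using norm_triangle_ineq3[of "(real_of_int (fst x), real_of_int (snd x))"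
      "(real_of_int (fst z), real_of_int (snd z))"] by simp

lemma znorm_triangle_diff: "znorm (x - y) \<le> znorm x + znorm y"
  unfolding znorm_eq_norm using norm_triangle_ineq4[of "(real_of_int (fst x), real_of_int (snd x))"
      "(real_of_int (fst y), real_of_int (snd y))"] by simp

definition directions :: "site set" where
  "directions = {(1, 0), (-1, 0), (0, 1), (0, -1)}"

definition tilt :: "site \<Rightarrow> site \<Rightarrow> real" where
  "tilt u w = real_of_int (fst u * fst w + snd u * snd w)"

lemma tilt_diff: "tilt u (x - y) = tilt u x - tilt u y"
  by (simp add: tilt_def algebra_simps)

lemma tilt_uminus_left: "tilt (- u) w = tilt u (- w)"
  by (simp add: tilt_def)

lemma uminus_directions: "u \<in> directions \<Longrightarrow> - u \<in> directions"
  by (auto simp: directions_def)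

lemma tilt_directions_cases:
  "u \<in> directions \<Longrightarrow> \<exists>a\<in>{1, 2}. (\<forall>w. tilt u w = coord a w) \<or> (\<forall>w. tilt u w = coord a (- w))"
  by (auto simp: directions_def tilt_def coord_def)

lemma exp_znorm_le_sum_tilt:
  assumes "0 \<le> T"
  shows "exp (T * znorm v) \<le> 1/2 * (\<Sum>u\<in>directions. exp (2 * T * tilt u v))"
proof -
  define a where "a = real_of_int (fst v)"
  define b where "b = real_of_int (snd v)"
  have "exp (T * znorm v) \<le> exp (T * \<bar>a\<bar>) * exp (T * \<bar>b\<bar>)"
    using mult_left_mono[OF sqrt_sum_squares_le_sum_abs[of a b] assms]
    by (simp add: znorm_def a_def b_def exp_add[symmetric] distrib_left)
  also have "\<dots> \<le> 1/2 * exp (2 * T * \<bar>a\<bar>) + 1/2 * exp (2 * T * \<bar>b\<bar>)"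
    using sum_squares_ge_zero[of "exp (T * \<bar>a\<bar>) - exp (T * \<bar>b\<bar>)" 0]
    by (simp add: power2_eq_square algebra_simps exp_add[symmetric])
  also have "\<dots> \<le> 1/2 * (exp (2 * T * a) + exp (- (2 * T * a))) + 1/2 * (exp (2 * T * b) + exp (- (2 * T * b)))"
    using assms by (intro add_mono mult_left_mono) (auto simp: abs_if)
  also have "\<dots> = 1/2 * (\<Sum>u\<in>directions. exp (2 * T * tilt u v))"
    by (simp add: directions_def tilt_def a_def b_def algebra_simps)
  finally show ?thesis .
qed

definition exp_tilt :: "real \<Rightarrow> (nat \<Rightarrow> site) \<Rightarrow> nat \<Rightarrow> config \<Rightarrow> config \<Rightarrow> real" where
  "exp_tilt \<theta> \<Theta> h z x = (\<Prod>i<h. exp (\<theta> * tilt (\<Theta> i) (x ! i - z ! i)))"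

lemma exp_tilt_pos: "0 < exp_tilt \<theta> \<Theta> h z x"
  unfolding exp_tilt_def by (intro prod_pos) auto

lemma exp_tilt_cocycle: "exp_tilt \<theta> \<Theta> h z x = exp_tilt \<theta> \<Theta> h z y * exp_tilt \<theta> \<Theta> h y x"
  unfolding exp_tilt_def prod.distrib[symmetric] exp_add[symmetric]
  by (intro prod.cong refl arg_cong[where f = exp]) (simp add: tilt_diff algebra_simps)

lemma exp_tilt_swap: "exp_tilt \<theta> \<Theta> h x z = exp_tilt \<theta> (\<lambda>i. - \<Theta> i) h z x"
  unfolding exp_tilt_def tilt_uminus_left by simp

lemma prod_exp_znorm_le_sum_exp_tilt:
  assumes "0 \<le> T"
  shows "(\<Prod>i<h. exp (T * znorm (x ! i - z ! i)))
     \<le> (1/2) ^ h * (\<Sum>\<Theta>\<in>PiE {..<h} (\<lambda>_. directions). exp_tilt (2 * T) \<Theta> h z x)"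
proof -
  have "(\<Prod>i<h. exp (T * znorm (x ! i - z ! i)))
      \<le> (\<Prod>i<h. 1/2 * (\<Sum>u\<in>directions. exp (2 * T * tilt u (x ! i - z ! i))))"
    using exp_znorm_le_sum_tilt[OF assms] by (intro prod_mono) auto
  also have "\<dots> = (1/2) ^ h * (\<Prod>i<h. \<Sum>u\<in>directions. exp (2 * T * tilt u (x ! i - z ! i)))"
    by (subst prod.distrib) simp
  also have "\<dots> = (1/2) ^ h * (\<Sum>\<Theta>\<in>PiE {..<h} (\<lambda>_. directions). exp_tilt (2 * T) \<Theta> h z x)"
    unfolding exp_tilt_def by (subst prod_sum_PiE) (auto simp: directions_def)
  finally show ?thesis .
qed

lemma nn_integral_site_translate:
  "(\<integral>\<^sup>+w. g (w - c) \<partial>count_space (UNIV :: site set)) = (\<integral>\<^sup>+w. g w \<partial>count_space UNIV)"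
  by (rule nn_integral_bij_count_space) (rule o_bij[of "\<lambda>w. w + c"], auto)

lemma nn_integral_exp_tilt_le:
  fixes F :: "site \<Rightarrow> real"
  assumes u: "u \<in> directions" and F_even: "\<And>w. F (- w) = F w" and F0: "\<And>w. 0 \<le> F w"
    and coord_bound: "\<And>a. a \<in> {1, 2} \<Longrightarrow> (\<lambda>w. exp (\<theta> * coord a w) * F w) summable_on UNIV \<and>
        (\<Sum>\<^sub>\<infinity>w. exp (\<theta> * coord a w) * F w) \<le> B"
  shows "(\<integral>\<^sup>+w. ennreal (exp (\<theta> * tilt u w) * F w) \<partial>count_space UNIV) \<le> ennreal B"
proof -
  obtain a where a: "a \<in> {1, 2}" and tilt_a: "(\<forall>w. tilt u w = coord a w) \<or> (\<forall>w. tilt u w = coord a (- w))"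
    using tilt_directions_cases[OF u] by blast
  have coord_a: "(\<integral>\<^sup>+w. ennreal (exp (\<theta> * coord a w) * F w) \<partial>count_space UNIV) \<le> ennreal B"
    using coord_bound[OF a] F0 by (simp add: nn_integral_count_space_eq_infsum ennreal_leI)
  have reflect: "(\<integral>\<^sup>+w. g (- w) \<partial>count_space UNIV) = (\<integral>\<^sup>+w. g w \<partial>count_space (UNIV :: site set))" for g
    by (rule nn_integral_bij_count_space) (rule o_bij[of uminus], auto)
  from tilt_a show ?thesis
  proof
    assume t: "\<forall>w. tilt u w = coord a (- w)"
    have "(\<lambda>w. ennreal (exp (\<theta> * tilt u w) * F w)) = (\<lambda>w. ennreal (exp (\<theta> * coord a (- w)) * F (- w)))"
      by (simp only: t F_even)
    then show ?thesis
      using coord_a reflect[of "\<lambda>w. ennreal (exp (\<theta> * coord a w) * F w)"] by simp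
  next
    assume t: "\<forall>w. tilt u w = coord a w"
    show ?thesis using coord_a by (simp only: t)
  qed
qed

lemma configs_Suc_bij: "bij_betw (\<lambda>(v, ys). v # ys) (UNIV \<times> configs h) (configs (Suc h))"
proof -
  have "configs (Suc h) \<subseteq> (\<lambda>(v, ys). v # ys) ` (UNIV \<times> configs h)"
  proof
    fix y assume "y \<in> configs (Suc h)"
    then obtain v ys where "y = v # ys" "length ys = h"
      by (cases y) (auto simp: configs_def)
    then show "y \<in> (\<lambda>(v, ys). v # ys) ` (UNIV \<times> configs h)"
      by (auto simp: configs_def image_def)
  qed
  then show ?thesis
    by (auto simp: bij_betw_def inj_on_def configs_def)
qed

lemma nn_integral_configs_prod:
  fixes G :: "nat \<Rightarrow> site \<Rightarrow> ennreal"
  shows "(\<integral>\<^sup>+y. (\<Prod>i<h. G i (y ! i)) \<partial>count_space (configs h)) = (\<Prod>i<h. \<integral>\<^sup>+v. G i v \<partial>count_space UNIV)"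
proof (induction h arbitrary: G)
  case 0
  have "configs 0 = {[]}" by (auto simp: configs_def)
  then show ?case by (simp add: nn_integral_count_space_finite)
next
  case (Suc h)
  interpret sigma_finite_measure "count_space (configs h)"
    by (rule sigma_finite_measure_count_space_countable) (rule countableI_type)
  have pair: "count_space (UNIV :: site set) \<Otimes>\<^sub>M count_space (configs h) = count_space (UNIV \<times> configs h)"
    by (rule pair_measure_countable) (auto intro: countableI_type)
  have "(\<integral>\<^sup>+y. (\<Prod>i<Suc h. G i (y ! i)) \<partial>count_space (configs (Suc h)))
      = (\<integral>\<^sup>+z. G 0 (fst z) * (\<Prod>i<h. G (Suc i) (snd z ! i)) \<partial>count_space (UNIV \<times> configs h))"
    by (subst nn_integral_bij_count_space[OF configs_Suc_bij, symmetric])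
      (auto intro!: nn_integral_cong simp del: prod.lessThan_Suc simp add: prod.lessThan_Suc_shift)
  also have "\<dots> = (\<integral>\<^sup>+v. \<integral>\<^sup>+ys. G 0 v * (\<Prod>i<h. G (Suc i) (ys ! i)) \<partial>count_space (configs h) \<partial>count_space UNIV)"
    using nn_integral_fst[of "\<lambda>z. G 0 (fst z) * (\<Prod>i<h. G (Suc i) (snd z ! i))"] by (simp add: pair)
  also have "\<dots> = (\<integral>\<^sup>+v. G 0 v \<partial>count_space UNIV) * (\<Prod>i<h. \<integral>\<^sup>+w. G (Suc i) w \<partial>count_space UNIV)"
    by (simp add: nn_integral_cmult nn_integral_multc Suc[of "\<lambda>i. G (Suc i)"])
  also have "\<dots> = (\<Prod>i<Suc h. \<integral>\<^sup>+v. G i v \<partial>count_space UNIV)"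
    by (simp del: prod.lessThan_Suc add: prod.lessThan_Suc_shift)
  finally show ?case .
qed

lemma prod_lessThan_remove2:
  fixes f :: "nat \<Rightarrow> 'b::comm_monoid_mult"
  assumes "a < h" "b < h" "a \<noteq> b"
  shows "(\<Prod>i<h. f i) = f a * f b * (\<Prod>i\<in>{..<h} - {a, b}. f i)"
proof -
  have "(\<Prod>i<h. f i) = f a * (\<Prod>i\<in>{..<h} - {a}. f i)"
    using assms by (subst prod.remove[of _ a]) auto
  also have "(\<Prod>i\<in>{..<h} - {a}. f i) = f b * (\<Prod>i\<in>{..<h} - {a} - {b}. f i)"
    using assms by (subst prod.remove[of _ b]) auto
  finally show ?thesis by (simp add: mult.assoc Diff_insert2[symmetric])
qed

text \<open>Summing out the coordinate b, which is pinned to the coordinate a, turns the constraint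
  into the factor g a * g b; the map y \<mapsto> y[b := y ! a] identifies the constrained
  configurations with those whose b-th entry is 0.\<close>
lemma nn_integral_configs_prod_diag_le:
  fixes g :: "nat \<Rightarrow> site \<Rightarrow> ennreal"
  assumes ab: "a < h" "b < h" "a \<noteq> b"
  shows "(\<integral>\<^sup>+y. (if y ! a = y ! b then \<Prod>i<h. g i (y ! i) else 0) \<partial>count_space (configs h))
     \<le> (\<integral>\<^sup>+v. g a v * g b v \<partial>count_space UNIV) * (\<Prod>i\<in>{..<h} - {a, b}. \<integral>\<^sup>+v. g i v \<partial>count_space UNIV)"
proof -
  define C where "C = {y \<in> configs h. y ! a = y ! b}"
  define D where "D = {y \<in> configs h. y ! b = 0}"
  define g' where "g' i v = (if i = a then g a v * g b v else if i = b then (if v = 0 then 1 else 0) else g i v)"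
    for i v
  let ?F = "\<lambda>y. if y ! a = y ! b then \<Prod>i<h. g i (y ! i) else 0"
  have "bij_betw (\<lambda>y. y[b := y ! a]) D C"
  proof (rule bij_betw_byWitness[where f' = "\<lambda>y. y[b := 0]"])
    show "\<forall>y\<in>D. (y[b := y ! a])[b := 0] = y"
      by (auto simp: D_def) (metis list_update_id)
    show "\<forall>y\<in>C. (y[b := 0])[b := y[b := 0] ! a] = y"
      using ab by (auto simp: C_def configs_def)
  qed (use ab in \<open>auto simp: C_def D_def configs_def\<close>)
  then have "(\<integral>\<^sup>+y. ?F y \<partial>count_space C) = (\<integral>\<^sup>+y. ?F (y[b := y ! a]) \<partial>count_space D)"
    by (rule nn_integral_bij_count_space[symmetric])
  also have "\<dots> = (\<integral>\<^sup>+y. (\<Prod>i<h. g' i (y ! i)) \<partial>count_space D)"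
  proof (rule nn_integral_cong)
    fix y assume "y \<in> space (count_space D)"
    then have y: "length y = h" "y ! b = 0" by (auto simp: D_def configs_def)
    then show "?F (y[b := y ! a]) = (\<Prod>i<h. g' i (y ! i))"
      using ab by (auto simp: prod_lessThan_remove2[OF ab] g'_def intro!: prod.cong)
  qed
  also have "\<dots> \<le> (\<integral>\<^sup>+y. (\<Prod>i<h. g' i (y ! i)) \<partial>count_space (configs h))"
    by (rule nn_integral_count_space_mono_set) (auto simp: D_def)
  also have "\<dots> = (\<Prod>i<h. \<integral>\<^sup>+v. g' i v \<partial>count_space UNIV)"
    by (rule nn_integral_configs_prod)
  also have "\<dots> = (\<integral>\<^sup>+v. g a v * g b v \<partial>count_space UNIV) * (\<Prod>i\<in>{..<h} - {a, b}. \<integral>\<^sup>+v. g i v \<partial>count_space UNIV)"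
  proof -
    have "(\<integral>\<^sup>+v. g' b v \<partial>count_space UNIV) = 1"
      using ab by (subst nn_integral_count_space'[where A = "{0}"]) (auto simp: g'_def)
    moreover have "(\<Prod>i\<in>{..<h} - {a, b}. \<integral>\<^sup>+v. g' i v \<partial>count_space UNIV)
        = (\<Prod>i\<in>{..<h} - {a, b}. \<integral>\<^sup>+v. g i v \<partial>count_space UNIV)"
      by (rule prod.cong) (auto simp: g'_def)
    ultimately show ?thesis
      by (simp add: prod_lessThan_remove2[OF ab] g'_def)
  qed
  finally show ?thesis
    by (subst nn_integral_count_space_eq[where B = C]) (auto simp: C_def)
qed

section \<open>Tilted bounds for the chain kernels\<close>

lemma QII_nonneg: "0 \<le> QII p h I n z x"
  by (simp add: QII_def qn_nonneg prod_nonneg)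

lemma Uchain_nonneg: "0 \<le> Uchain p h I k m z x"
  by (induction k arbitrary: m z x) (auto simp: QII_nonneg intro!: sum_nonneg infsum_nonneg)

lemma Uchain_eq_0: "m < k \<Longrightarrow> Uchain p h I k m z x = 0"
  by (induction k arbitrary: m z x) auto

lemma Uchain_Suc:
  "k \<noteq> 0 \<Longrightarrow> Uchain p h I (Suc k) m
     = (\<lambda>z x. \<Sum>n\<in>{1..<m}. kernel_comp (configs h) (Uchain p h I k n) (QII p h I (m - n)) z x)"
  by (simp add: kernel_comp_def fun_eq_iff)

lemma nn_integral_exp_tilt_QII_factor_le:
  assumes ab: "a < h" "b < h" "a \<noteq> b" and pinned: "\<And>y. sim y I \<Longrightarrow> y ! a = y ! b"
  shows "(\<integral>\<^sup>+x. ennreal (exp_tilt \<theta> \<Theta> h z x * QII p h I n z x) \<partial>count_space (configs h))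
      \<le> (\<integral>\<^sup>+w. ennreal (exp (\<theta> * tilt (\<Theta> a) w + \<theta> * tilt (\<Theta> b) w) * (qn p n w)\<^sup>2) \<partial>count_space UNIV)
        * (\<Prod>i\<in>{..<h} - {a, b}. \<integral>\<^sup>+w. ennreal (exp (\<theta> * tilt (\<Theta> i) w) * qn p n w) \<partial>count_space UNIV)"
proof (cases "sim z I")
  case True
  then have "z ! a = z ! b" by (rule pinned)
  define g where "g i v = ennreal (exp (\<theta> * tilt (\<Theta> i) (v - z ! i)) * qn p n (v - z ! i))" for i v
  let ?pair = "\<lambda>w. ennreal (exp (\<theta> * tilt (\<Theta> a) w + \<theta> * tilt (\<Theta> b) w) * (qn p n w)\<^sup>2)"
  have "(\<integral>\<^sup>+x. ennreal (exp_tilt \<theta> \<Theta> h z x * QII p h I n z x) \<partial>count_space (configs h))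
      \<le> (\<integral>\<^sup>+x. (if x ! a = x ! b then \<Prod>i<h. g i (x ! i) else 0) \<partial>count_space (configs h))"
    using True pinned
    by (intro nn_integral_mono) (auto simp: QII_def g_def exp_tilt_def prod.distrib[symmetric] prod_ennreal qn_nonneg)
  also have "\<dots> \<le> (\<integral>\<^sup>+v. g a v * g b v \<partial>count_space UNIV) * (\<Prod>i\<in>{..<h} - {a, b}. \<integral>\<^sup>+v. g i v \<partial>count_space UNIV)"
    by (rule nn_integral_configs_prod_diag_le[OF ab])
  also have "(\<integral>\<^sup>+v. g a v * g b v \<partial>count_space UNIV) = (\<integral>\<^sup>+v. ?pair (v - z ! a) \<partial>count_space UNIV)"
    unfolding g_def using \<open>z ! a = z ! b\<close> qn_nonneg
    by (intro nn_integral_cong) (simp add: ennreal_mult[symmetric] exp_add power2_eq_square algebra_simps)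
  also have "\<dots> = (\<integral>\<^sup>+w. ?pair w \<partial>count_space UNIV)"
    by (rule nn_integral_site_translate[of ?pair])
  also have "(\<Prod>i\<in>{..<h} - {a, b}. \<integral>\<^sup>+v. g i v \<partial>count_space UNIV)
      = (\<Prod>i\<in>{..<h} - {a, b}. \<integral>\<^sup>+w. ennreal (exp (\<theta> * tilt (\<Theta> i) w) * qn p n w) \<partial>count_space UNIV)"
    unfolding g_def
    by (intro prod.cong refl nn_integral_site_translate[of "\<lambda>w. ennreal (exp (\<theta> * tilt (\<Theta> i) w) * qn p n w)" for i])
  finally show ?thesis .
qed (simp add: QII_def)

lemma exp_pair_mult_power_le:
  fixes c :: real
  assumes "0 \<le> c" "2 \<le> h"
  shows "exp (2 * c) * exp (c / 2) ^ (h - 2) \<le> exp (c * real h)"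
proof -
  have "2 + real (h - 2) / 2 \<le> real h"
    using assms(2) by (simp add: of_nat_diff field_simps)
  then have "(2 + real (h - 2) / 2) * c \<le> real h * c"
    using assms(1) by (rule mult_right_mono)
  then show ?thesis
    by (simp add: exp_of_nat_mult[symmetric] exp_add[symmetric] algebra_simps)
qed

locale walk_moment_bounds =
  fixes p :: "site pmf" and cc :: real
  assumes symm: "\<And>x. pmf p x = pmf p (- x)"
    and cc_ge1: "cc \<ge> 1"
    and cc1: "\<And>t' n a. t' \<ge> 0 \<Longrightarrow> n \<ge> 1 \<Longrightarrow> a \<in> {1,2} \<Longrightarrow>
        (\<lambda>x. exp (t' * coord a x) * qn p n x) summable_on UNIV \<and>
        (\<Sum>\<^sub>\<infinity>x. exp (t' * coord a x) * qn p n x) \<le> exp (cc * t'\<^sup>2 * real n / 2)"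
    and cc2: "\<And>t' n a. t' \<ge> 0 \<Longrightarrow> n \<ge> 1 \<Longrightarrow> a \<in> {1,2} \<Longrightarrow>
        (\<lambda>x. exp (t' * coord a x) * (qn p n x)\<^sup>2 / qn p (2 * n) 0) summable_on UNIV \<and>
        (\<Sum>\<^sub>\<infinity>x. exp (t' * coord a x) * (qn p n x)\<^sup>2 / qn p (2 * n) 0) \<le> exp (cc * t'\<^sup>2 * real n / 2)"
begin

lemma nn_integral_exp_tilt_qn_le:
  assumes "u \<in> directions" "1 \<le> n" "0 \<le> \<theta>"
  shows "(\<integral>\<^sup>+w. ennreal (exp (\<theta> * tilt u w) * qn p n w) \<partial>count_space UNIV)
      \<le> ennreal (exp (cc * \<theta>\<^sup>2 * real n / 2))"
  using nn_integral_exp_tilt_le[of u "qn p n" \<theta>] assms cc1[of \<theta> n] qn_uminus[OF symm] qn_nonneg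
  by blast

lemma nn_integral_exp_tilt_qn_sq_le:
  assumes "u \<in> directions" "1 \<le> n" "0 \<le> \<theta>"
  shows "(\<integral>\<^sup>+w. ennreal (exp (\<theta> * tilt u w) * (qn p n w)\<^sup>2) \<partial>count_space UNIV)
      \<le> ennreal (exp (cc * \<theta>\<^sup>2 * real n / 2) * qn p (2 * n) 0)"
proof -
  define Q where "Q = qn p (2 * n) 0"
  have "0 < Q" using qn_double_zero_pos[OF symm] by (simp add: Q_def)
  have "(\<integral>\<^sup>+w. ennreal (exp (\<theta> * tilt u w) * (qn p n w)\<^sup>2) \<partial>count_space UNIV)
      = ennreal Q * (\<integral>\<^sup>+w. ennreal (exp (\<theta> * tilt u w) * ((qn p n w)\<^sup>2 / Q)) \<partial>count_space UNIV)"
    using \<open>0 < Q\<close> by (subst nn_integral_cmult[symmetric])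
      (auto intro!: nn_integral_cong simp: ennreal_mult[symmetric])
  also have "\<dots> \<le> ennreal Q * ennreal (exp (cc * \<theta>\<^sup>2 * real n / 2))"
    using cc2[of \<theta> n] assms qn_uminus[OF symm] \<open>0 < Q\<close>
    by (intro mult_left_mono nn_integral_exp_tilt_le) (auto simp: Q_def)
  finally show ?thesis
    using \<open>0 < Q\<close> by (simp add: Q_def ennreal_mult[symmetric] mult.commute)
qed

lemma nn_integral_exp_tilt2_qn_sq_le:
  assumes "u \<in> directions" "u' \<in> directions" "1 \<le> n" "0 \<le> \<theta>"
  shows "(\<integral>\<^sup>+w. ennreal (exp (\<theta> * tilt u w + \<theta> * tilt u' w) * (qn p n w)\<^sup>2) \<partial>count_space UNIV)
      \<le> ennreal (exp (2 * cc * \<theta>\<^sup>2 * real n) * qn p (2 * n) 0)"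
proof -
  define B where "B = exp (2 * cc * \<theta>\<^sup>2 * real n) * qn p (2 * n) 0"
  have "0 \<le> B" by (simp add: B_def qn_nonneg)
  have sq: "(\<integral>\<^sup>+w. ennreal (exp (2 * \<theta> * tilt v w) * (qn p n w)\<^sup>2) \<partial>count_space UNIV) \<le> ennreal B"
    if "v \<in> directions" for v
    using nn_integral_exp_tilt_qn_sq_le[OF that \<open>1 \<le> n\<close>, of "2 * \<theta>"] \<open>0 \<le> \<theta>\<close>
    by (simp add: B_def power2_eq_square mult_ac)
  have "exp (\<theta> * tilt u w + \<theta> * tilt u' w) * (qn p n w)\<^sup>2
      \<le> exp (2 * \<theta> * tilt u w) * (qn p n w)\<^sup>2 / 2 + exp (2 * \<theta> * tilt u' w) * (qn p n w)\<^sup>2 / 2"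
    for w
    using mult_right_mono[OF sum_squares_ge_zero[of "exp (\<theta> * tilt u w) - exp (\<theta> * tilt u' w)" 0],
        of "(qn p n w)\<^sup>2"]
    by (simp add: power2_eq_square algebra_simps exp_add[symmetric])
  then have "ennreal (exp (\<theta> * tilt u w + \<theta> * tilt u' w) * (qn p n w)\<^sup>2)
      \<le> ennreal (exp (2 * \<theta> * tilt u w) * (qn p n w)\<^sup>2) / 2
        + ennreal (exp (2 * \<theta> * tilt u' w) * (qn p n w)\<^sup>2) / 2" for w
    by (simp add: ennreal_divide_numeral ennreal_plus[symmetric] ennreal_leI del: ennreal_plus)
  then have "(\<integral>\<^sup>+w. ennreal (exp (\<theta> * tilt u w + \<theta> * tilt u' w) * (qn p n w)\<^sup>2) \<partial>count_space UNIV)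
      \<le> (\<integral>\<^sup>+w. ennreal (exp (2 * \<theta> * tilt u w) * (qn p n w)\<^sup>2) / 2
        + ennreal (exp (2 * \<theta> * tilt u' w) * (qn p n w)\<^sup>2) / 2 \<partial>count_space UNIV)"
    by (intro nn_integral_mono) simp
  also have "\<dots> = (\<integral>\<^sup>+w. ennreal (exp (2 * \<theta> * tilt u w) * (qn p n w)\<^sup>2) \<partial>count_space UNIV) / 2
        + (\<integral>\<^sup>+w. ennreal (exp (2 * \<theta> * tilt u' w) * (qn p n w)\<^sup>2) \<partial>count_space UNIV) / 2"
    by (simp add: nn_integral_add nn_integral_divide)
  also have "\<dots> \<le> ennreal B / 2 + ennreal B / 2"
    using sq assms by (intro add_mono divide_right_mono_ennreal) auto
  also have "\<dots> = ennreal B"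
    using \<open>0 \<le> B\<close> by (simp add: ennreal_divide_numeral ennreal_plus[symmetric] del: ennreal_plus)
  finally show ?thesis by (simp add: B_def)
qed

lemma QII_swap: "QII p h I n x z = QII p h I n z x"
proof -
  have "qn p n (z ! i - x ! i) = qn p n (x ! i - z ! i)" for i
    using qn_uminus[OF symm, of n "x ! i - z ! i"] by simp
  then show ?thesis by (simp add: QII_def conj_commute)
qed

lemma nn_integral_exp_tilt_QII_le:
  assumes ab: "a < h" "b < h" "a \<noteq> b" and pinned: "\<And>y. sim y I \<Longrightarrow> y ! a = y ! b"
    and n: "1 \<le> n" and \<theta>: "0 \<le> \<theta>" and \<Theta>: "\<And>i. i < h \<Longrightarrow> \<Theta> i \<in> directions"
  shows "(\<integral>\<^sup>+x. ennreal (exp_tilt \<theta> \<Theta> h z x * QII p h I n z x) \<partial>count_space (configs h))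
      \<le> ennreal (exp (cc * \<theta>\<^sup>2 * real h * real n) * qn p (2 * n) 0)"
proof -
  define E where "E = exp (cc * \<theta>\<^sup>2 * real n / 2)"
  define Q where "Q = qn p (2 * n) 0"
  have "(\<integral>\<^sup>+x. ennreal (exp_tilt \<theta> \<Theta> h z x * QII p h I n z x) \<partial>count_space (configs h))
      \<le> ennreal (exp (2 * cc * \<theta>\<^sup>2 * real n) * Q) * (\<Prod>i\<in>{..<h} - {a, b}. ennreal E)"
    unfolding Q_def E_def using ab \<Theta> n \<theta>
    by (intro order_trans[OF nn_integral_exp_tilt_QII_factor_le[OF ab pinned]] mult_mono prod_mono_ennreal
        nn_integral_exp_tilt2_qn_sq_le nn_integral_exp_tilt_qn_le) auto
  also have "\<dots> = ennreal (exp (2 * cc * \<theta>\<^sup>2 * real n) * Q * E ^ (h - 2))"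
  proof -
    have "card ({..<h} - {a, b}) = h - 2"
      using ab by (subst card_Diff_subset) auto
    then show ?thesis by (simp add: E_def Q_def qn_nonneg ennreal_mult ennreal_power)
  qed
  also have "\<dots> \<le> ennreal (exp (cc * \<theta>\<^sup>2 * real h * real n) * Q)"
  proof (rule ennreal_leI)
    have "2 \<le> h" using ab by linarith
    then have "exp (2 * cc * \<theta>\<^sup>2 * real n) * E ^ (h - 2) \<le> exp (cc * \<theta>\<^sup>2 * real h * real n)"
      using exp_pair_mult_power_le[of "cc * \<theta>\<^sup>2 * real n" h] cc_ge1 by (simp add: E_def mult_ac)
    then have "exp (2 * cc * \<theta>\<^sup>2 * real n) * E ^ (h - 2) * Q \<le> exp (cc * \<theta>\<^sup>2 * real h * real n) * Q"
      by (rule mult_right_mono) (simp add: Q_def qn_nonneg)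
    then show "exp (2 * cc * \<theta>\<^sup>2 * real n) * Q * E ^ (h - 2) \<le> exp (cc * \<theta>\<^sup>2 * real h * real n) * Q"
      by (simp only: ac_simps)
  qed
  finally show ?thesis by (simp add: Q_def)
qed

lemma row_col_sums_le_exp_tilt_QII:
  assumes ab: "a < h" "b < h" "a \<noteq> b" and pinned: "\<And>y. sim y I \<Longrightarrow> y ! a = y ! b"
    and n: "1 \<le> n" and \<theta>: "0 \<le> \<theta>" and \<Theta>: "\<And>i. i < h \<Longrightarrow> \<Theta> i \<in> directions"
  shows "row_col_sums_le (configs h) (\<lambda>z x. exp_tilt \<theta> \<Theta> h z x * QII p h I n z x)
      (exp (cc * \<theta>\<^sup>2 * real h * real n) * qn p (2 * n) 0)"
proof -
  have rows: "row_sums_le (configs h) (\<lambda>z x. exp_tilt \<theta> \<Theta>' h z x * QII p h I n z x)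
      (exp (cc * \<theta>\<^sup>2 * real h * real n) * qn p (2 * n) 0)"
    if "\<And>i. i < h \<Longrightarrow> \<Theta>' i \<in> directions" for \<Theta>'
    using nn_integral_exp_tilt_QII_le[OF ab pinned n \<theta> that] exp_tilt_pos
    by (auto simp: row_sums_le_def qn_nonneg QII_nonneg less_imp_le)
  \<comment> \<open>Since q_n is symmetric, the columns are the rows for the opposite directions.\<close>
  have "(\<lambda>x z. exp_tilt \<theta> \<Theta> h z x * QII p h I n z x) = (\<lambda>x z. exp_tilt \<theta> (\<lambda>i. - \<Theta> i) h x z * QII p h I n x z)"
    by (intro ext) (simp add: exp_tilt_swap[of \<theta> \<Theta> h] QII_swap[of h I n])
  then show ?thesis
    unfolding row_col_sums_le_def using rows \<Theta> uminus_directions by auto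
qed

lemma row_col_sums_le_exp_tilt_Uchain:
  assumes ab: "a < h" "b < h" "a \<noteq> b" and pinned: "\<And>y. sim y I \<Longrightarrow> y ! a = y ! b"
    and \<theta>: "0 \<le> \<theta>" and \<Theta>: "\<And>i. i < h \<Longrightarrow> \<Theta> i \<in> directions"
  shows "row_col_sums_le (configs h) (\<lambda>z x. exp_tilt \<theta> \<Theta> h z x * Uchain p h I k m z x)
      (conv_pow (\<lambda>n. exp (cc * \<theta>\<^sup>2 * real h * real n) * qn p (2 * n) 0) k m)"
proof (induction k arbitrary: m)
  case 0
  then show ?case by (simp add: row_col_sums_le_zero)
next
  case (Suc k)
  let ?E = "exp_tilt \<theta> \<Theta> h"
  show ?case
  proof (cases "k = 0")
    case True
    then show ?thesis
      using row_col_sums_le_exp_tilt_QII[OF ab pinned _ \<theta> \<Theta>, where n = m] by (simp add: row_col_sums_le_zero)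
  next
    case False
    have "(\<lambda>z x. ?E z x * Uchain p h I (Suc k) m z x) = (\<lambda>z x. \<Sum>n\<in>{1..<m}.
        kernel_comp (configs h) (\<lambda>z y. ?E z y * Uchain p h I k n z y) (\<lambda>y x. ?E y x * QII p h I (m - n) y x) z x)"
      using kernel_comp_mult_cocycle[where E = "exp_tilt \<theta> \<Theta> h" and S = "configs h", OF exp_tilt_cocycle]
      by (simp add: Uchain_Suc[OF False] sum_distrib_left fun_eq_iff)
    moreover have "row_col_sums_le (configs h) (\<lambda>z x. \<Sum>n\<in>{1..<m}.
        kernel_comp (configs h) (\<lambda>z y. ?E z y * Uchain p h I k n z y) (\<lambda>y x. ?E y x * QII p h I (m - n) y x) z x)
      (\<Sum>n\<in>{1..<m}. conv_pow (\<lambda>n. exp (cc * \<theta>\<^sup>2 * real h * real n) * qn p (2 * n) 0) k n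
         * (exp (cc * \<theta>\<^sup>2 * real h * real (m - n)) * qn p (2 * (m - n)) 0))"
      by (intro row_col_sums_le_sum row_col_sums_le_comp Suc.IH row_col_sums_le_exp_tilt_QII[OF ab pinned _ \<theta> \<Theta>])
        (auto intro: countableI_type)
    ultimately show ?thesis
      using False by simp
  qed
qed

end

section \<open>Weights and the main estimate\<close>

lemma Wt_ratio_le:
  assumes "z \<in> configs h" "x \<in> configs h" "0 \<le> t"
  shows "Wt t z / Wt t x \<le> (\<Prod>i<h. exp (t * znorm (x ! i - z ! i)))"
proof -
  have "Wt t z / Wt t x = (\<Prod>i<h. exp (- t * znorm (z ! i)) / exp (- t * znorm (x ! i)))"
    using assms by (simp add: Wt_def configs_def prod_dividef)
  also have "\<dots> \<le> (\<Prod>i<h. exp (t * znorm (x ! i - z ! i)))"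
  proof (intro prod_mono conjI)
    fix i
    have "t * (znorm (x ! i) - znorm (z ! i)) \<le> t * znorm (x ! i - z ! i)"
      using znorm_diff_le[of "x ! i" "z ! i"] \<open>0 \<le> t\<close> by (intro mult_left_mono) auto
    then show "exp (- t * znorm (z ! i)) / exp (- t * znorm (x ! i)) \<le> exp (t * znorm (x ! i - z ! i))"
      by (simp add: exp_diff[symmetric] algebra_simps)
  qed simp
  finally show ?thesis .
qed

lemma Vpair_Wt_ratio_le:
  assumes zx: "z \<in> configs h" "x \<in> configs h" and t: "0 \<le> t" and s: "0 \<le> s"
    and \<tau>: "\<tau> \<in> {1, -1}" and ab: "a < h" "b < h" "a \<noteq> b"
  shows "Vpair s a b z powr \<tau> * Wt t z / (Wt t x * Vpair s a b x powr \<tau>)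
      \<le> (\<Prod>i<h. exp ((t + s) * znorm (x ! i - z ! i)))"
proof -
  define d where "d i = znorm (x ! i - z ! i)" for i
  have "\<tau> * s * (znorm (x ! a - x ! b) - znorm (z ! a - z ! b)) \<le> s * \<bar>znorm (x ! a - x ! b) - znorm (z ! a - z ! b)\<bar>"
    using abs_ge_self[of "\<tau> * s * (znorm (x ! a - x ! b) - znorm (z ! a - z ! b))"] \<tau> s
    by (auto simp: abs_mult)
  also have "\<dots> \<le> s * znorm ((x ! a - z ! a) - (x ! b - z ! b))"
    using znorm_diff_le[of "x ! a - x ! b" "z ! a - z ! b"] s by (intro mult_left_mono) (auto simp: algebra_simps)
  also have "\<dots> \<le> s * d a + s * d b"
    using znorm_triangle_diff s by (simp add: d_def distrib_left[symmetric] mult_left_mono)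
  finally have "Vpair s a b z powr \<tau> / Vpair s a b x powr \<tau> \<le> exp (s * d a) * exp (s * d b)"
    by (simp add: Vpair_def exp_powr_real exp_diff[symmetric] exp_add[symmetric] algebra_simps)
  also have "\<dots> \<le> (\<Prod>i<h. exp (s * d i))"
    using s prod_ge_1[of "{..<h} - {a, b}" "\<lambda>i. exp (s * d i)"]
    by (simp add: prod_lessThan_remove2[OF ab] d_def znorm_nonneg)
  finally have V: "Vpair s a b z powr \<tau> / Vpair s a b x powr \<tau> \<le> (\<Prod>i<h. exp (s * d i))" .
  have "Vpair s a b z powr \<tau> * Wt t z / (Wt t x * Vpair s a b x powr \<tau>)
      = (Wt t z / Wt t x) * (Vpair s a b z powr \<tau> / Vpair s a b x powr \<tau>)"
    by simp
  also have "\<dots> \<le> (\<Prod>i<h. exp (t * d i)) * (\<Prod>i<h. exp (s * d i))"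
    using Wt_ratio_le[OF zx t] V unfolding d_def
    by (intro mult_mono) (auto simp: Wt_def intro: prod_nonneg)
  also have "\<dots> = (\<Prod>i<h. exp ((t + s) * znorm (x ! i - z ! i)))"
    by (simp add: prod.distrib[symmetric] exp_add[symmetric] d_def distrib_right)
  finally show ?thesis .
qed

lemma partition_pinned_pair:
  assumes "is_partition h I" "I \<noteq> star_partition h"
  obtains a b where "a < h" "b < h" "a \<noteq> b" "\<And>y. sim y I \<Longrightarrow> y ! a = y ! b"
proof -
  have cover: "\<Union>I = {..<h}" and ne: "{} \<notin> I"
    using assms(1) by (auto simp: is_partition_def partition_on_def)
  have "\<exists>B\<in>I. \<exists>a\<in>B. \<exists>b\<in>B. a \<noteq> b"
  proof (rule ccontr)
    assume "\<not> (\<exists>B\<in>I. \<exists>a\<in>B. \<exists>b\<in>B. a \<noteq> b)"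
    then have single: "B = {i}" if "B \<in> I" "i \<in> B" for B i
      using that by blast
    have "I \<subseteq> star_partition h"
    proof
      fix B assume "B \<in> I"
      then obtain i where "i \<in> B"
        using ne by (metis all_not_in_conv)
      then have "B = {i}" "i < h"
        using single[OF \<open>B \<in> I\<close>] cover \<open>B \<in> I\<close> by auto
      then show "B \<in> star_partition h"
        by (simp add: star_partition_def)
    qed
    moreover have "star_partition h \<subseteq> I"
    proof
      fix B assume "B \<in> star_partition h"
      then obtain i where "i < h" "B = {i}" by (auto simp: star_partition_def)
      then obtain B' where "B' \<in> I" "i \<in> B'"
        using cover by (metis UnionE lessThan_iff)
      then show "B \<in> I"
        using single[of B' i] \<open>B = {i}\<close> by simp
    qed
    ultimately show False
      using assms(2) by simp
  qed
  then obtain B a b where B: "B \<in> I" "a \<in> B" "b \<in> B" and "a \<noteq> b" by blast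
  have "a < h" "b < h"
    using cover B by auto
  moreover have "y ! a = y ! b" if "sim y I" for y
    using that B unfolding sim_def by blast
  ultimately show thesis
    using \<open>a \<noteq> b\<close> that by blast
qed

lemma absU_eq_sum: "absU p \<mu> \<beta> h I m z x = (\<Sum>k=1..m. \<bar>xi_I \<mu> \<beta> I\<bar> ^ k * Uchain p h I k m z x)"
  unfolding absU_def by (subst infsum_cong_neutral[where T = "{1..m}"]) (auto simp: Uchain_eq_0)

lemma weighted_absUhat_le:
  fixes w :: real
  assumes T: "0 \<le> T" and xi: "\<bar>xi_I \<mu> \<beta> I\<bar> \<le> \<sigma>" and w0: "0 \<le> w"
    and w_le: "w \<le> (\<Prod>i<h. exp (T * znorm (x ! i - z ! i)))"
  shows "w * absUhat p \<mu> \<beta> h I L lam z x \<le> (if z = x then 1 else 0)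
      + (\<Sum>m=1..L. \<Sum>k=1..m. exp (- lam * real m) * \<sigma> ^ k * (1/2) ^ h
          * (\<Sum>\<Theta>\<in>PiE {..<h} (\<lambda>_. directions). exp_tilt (2 * T) \<Theta> h z x * Uchain p h I k m z x))"
proof -
  let ?P = "PiE {..<h} (\<lambda>_. directions)"
  have diag: "w * (if z = x \<and> sim x I then 1 else 0) \<le> (if z = x then 1 else 0)"
    using w_le by (auto simp: znorm_def)
  have wU: "w * Uchain p h I k m z x \<le> (1/2) ^ h * (\<Sum>\<Theta>\<in>?P. exp_tilt (2 * T) \<Theta> h z x * Uchain p h I k m z x)"
    for k m
    using mult_right_mono[OF order_trans[OF w_le prod_exp_znorm_le_sum_exp_tilt[OF T]] Uchain_nonneg]
    by (simp add: sum_distrib_right mult.assoc)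
  have "exp (- lam * real m) * \<bar>xi_I \<mu> \<beta> I\<bar> ^ k * (w * Uchain p h I k m z x)
      \<le> exp (- lam * real m) * \<sigma> ^ k * (1/2) ^ h * (\<Sum>\<Theta>\<in>?P. exp_tilt (2 * T) \<Theta> h z x * Uchain p h I k m z x)"
    for k m
  proof -
    have "exp (- lam * real m) * \<bar>xi_I \<mu> \<beta> I\<bar> ^ k \<le> exp (- lam * real m) * \<sigma> ^ k"
      using xi by (intro mult_left_mono power_mono) auto
    then have "exp (- lam * real m) * \<bar>xi_I \<mu> \<beta> I\<bar> ^ k * (w * Uchain p h I k m z x)
        \<le> exp (- lam * real m) * \<sigma> ^ k * ((1/2) ^ h * (\<Sum>\<Theta>\<in>?P. exp_tilt (2 * T) \<Theta> h z x * Uchain p h I k m z x))"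
      using xi w0 by (intro mult_mono[OF _ wU]) (auto simp: Uchain_nonneg)
    then show ?thesis by (simp add: mult.assoc)
  qed
  then have "(\<Sum>m=1..L. \<Sum>k=1..m. exp (- lam * real m) * \<bar>xi_I \<mu> \<beta> I\<bar> ^ k * (w * Uchain p h I k m z x))
      \<le> (\<Sum>m=1..L. \<Sum>k=1..m. exp (- lam * real m) * \<sigma> ^ k * (1/2) ^ h
          * (\<Sum>\<Theta>\<in>?P. exp_tilt (2 * T) \<Theta> h z x * Uchain p h I k m z x))"
    by (intro sum_mono)
  moreover have "w * absUhat p \<mu> \<beta> h I L lam z x = w * (if z = x \<and> sim x I then 1 else 0)
      + (\<Sum>m=1..L. \<Sum>k=1..m. exp (- lam * real m) * \<bar>xi_I \<mu> \<beta> I\<bar> ^ k * (w * Uchain p h I k m z x))"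
    by (simp add: absUhat_def absU_eq_sum distrib_left sum_distrib_left mult_ac)
  ultimately show ?thesis
    using diag by linarith
qed

lemma absUhat_nonneg: "0 \<le> absUhat p \<mu> \<beta> h I L lam z x"
  unfolding absUhat_def absU_eq_sum
  by (intro add_nonneg_nonneg sum_nonneg mult_nonneg_nonneg) (auto simp: Uchain_nonneg)

lemma sum_tilted_conv_pow_le:
  assumes "0 \<le> \<sigma>" "0 \<le> cc" "\<sigma> * RL p L lam < 1"
  shows "(\<Sum>m=1..L. \<Sum>k=1..m. exp (- lam * real m) * \<sigma> ^ k * (1/2) ^ h
      * (\<Sum>\<Theta>\<in>PiE {..<h} (\<lambda>_. directions). conv_pow (\<lambda>n. exp (cc * (2 * T)\<^sup>2 * real h * real n) * qn p (2 * n) 0) k m))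
    \<le> (2 * exp (4 * cc * T\<^sup>2 * real L)) ^ h * (\<sigma> * RL p L lam / (1 - \<sigma> * RL p L lam))"
proof -
  define G where "G = cc * (2 * T)\<^sup>2 * real h"
  have "card directions = 4" by (simp add: directions_def)
  then have card: "real (card (PiE {..<h} (\<lambda>_. directions))) = 4 ^ h" by (simp add: card_PiE)
  have "(1/2::real) ^ h * 4 ^ h = 2 ^ h" by (simp add: power_mult_distrib[symmetric])
  then have scale: "e * (1/2) ^ h * (4 ^ h * u) = 2 ^ h * (e * u)" for e u :: real
    by (simp only: mult_ac flip: \<open>(1/2::real) ^ h * 4 ^ h = 2 ^ h\<close>)
  have "(\<Sum>m=1..L. \<Sum>k=1..m. exp (- lam * real m) * \<sigma> ^ k * (1/2) ^ h
      * (\<Sum>\<Theta>\<in>PiE {..<h} (\<lambda>_. directions). conv_pow (\<lambda>n. exp (cc * (2 * T)\<^sup>2 * real h * real n) * qn p (2 * n) 0) k m))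
    = 2 ^ h * (\<Sum>m=1..L. \<Sum>k=1..m. exp (- lam * real m) * \<sigma> ^ k * conv_pow (\<lambda>n. exp (G * real n) * qn p (2 * n) 0) k m)"
    by (simp only: G_def sum_constant card scale sum_distrib_left)
  also have "\<dots> \<le> 2 ^ h * (exp (G * real L) * (\<sigma> * RL p L lam / (1 - \<sigma> * RL p L lam)))"
    unfolding RL_def using assms by (intro mult_left_mono sum_weighted_conv_pow_le) (auto simp: qn_nonneg G_def RL_def)
  also have "\<dots> = (2 * exp (4 * cc * T\<^sup>2 * real L)) ^ h * (\<sigma> * RL p L lam / (1 - \<sigma> * RL p L lam))"
    by (simp add: G_def power_mult_distrib exp_of_nat_mult[symmetric] power2_eq_square mult_ac)
  finally show ?thesis .
qed

context walk_moment_bounds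
begin

lemma lq_opnorm_le_weighted_absUhat:
  fixes w :: "config \<Rightarrow> config \<Rightarrow> real"
  assumes I: "is_partition h I" "I \<noteq> star_partition h"
    and xi: "\<bar>xi_I \<mu> \<beta> I\<bar> \<le> \<sigma>" and small: "\<sigma> * RL p L lam < 1" and q: "1 < q" and T: "0 \<le> T"
    and w0: "\<And>z x. 0 \<le> w z x"
    and w_le: "\<And>z x. z \<in> configs h \<Longrightarrow> x \<in> configs h \<Longrightarrow> w z x \<le> (\<Prod>i<h. exp (T * znorm (x ! i - z ! i)))"
  shows "lq_opnorm_le q (configs_I h I) (\<lambda>z x. w z x * absUhat p \<mu> \<beta> h I L lam z x)
     (1 + (2 * exp (4 * cc * T\<^sup>2 * real L)) ^ h * (\<sigma> * RL p L lam / (1 - \<sigma> * RL p L lam)))"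
proof -
  obtain a b where ab: "a < h" "b < h" "a \<noteq> b" and pinned: "\<And>y. sim y I \<Longrightarrow> y ! a = y ! b"
    using partition_pinned_pair[OF I] by blast
  have "0 \<le> \<sigma>" using xi by linarith
  define c where "c m k = exp (- lam * real m) * \<sigma> ^ k * (1/2) ^ h" for m k :: nat
  define K where "K z x = (if z = x then 1 else 0) + (\<Sum>m=1..L. \<Sum>k=1..m.
      c m k * (\<Sum>\<Theta>\<in>PiE {..<h} (\<lambda>_. directions). exp_tilt (2 * T) \<Theta> h z x * Uchain p h I k m z x))"
    for z x
  define C where "C = 1 + (\<Sum>m=1..L. \<Sum>k=1..m. c m k * (\<Sum>\<Theta>\<in>PiE {..<h} (\<lambda>_. directions).
      conv_pow (\<lambda>n. exp (cc * (2 * T)\<^sup>2 * real h * real n) * qn p (2 * n) 0) k m))"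
  have "row_col_sums_le (configs h) K C"
    unfolding K_def C_def c_def using \<open>0 \<le> \<sigma>\<close> T
    by (intro row_col_sums_le_add row_col_sums_le_diag row_col_sums_le_sum row_col_sums_le_cmult
        row_col_sums_le_exp_tilt_Uchain[OF ab pinned]) (auto simp: finite_PiE directions_def)
  moreover have "configs_I h I \<subseteq> configs h"
    by (auto simp: configs_I_def configs_def)
  moreover have "C \<le> 1 + (2 * exp (4 * cc * T\<^sup>2 * real L)) ^ h * (\<sigma> * RL p L lam / (1 - \<sigma> * RL p L lam))"
    unfolding C_def c_def using sum_tilted_conv_pow_le[OF \<open>0 \<le> \<sigma>\<close> _ small, where h = h and T = T] cc_ge1
    by simp
  moreover have "0 \<le> w z x * absUhat p \<mu> \<beta> h I L lam z x" for z x
    using w0 absUhat_nonneg by (rule mult_nonneg_nonneg)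
  moreover have "w z x * absUhat p \<mu> \<beta> h I L lam z x \<le> K z x"
    if "z \<in> configs_I h I" "x \<in> configs_I h I" for z x
    unfolding K_def c_def using weighted_absUhat_le[OF T xi w0 w_le] that
    by (simp add: configs_I_def configs_def)
  ultimately have "row_col_sums_le (configs_I h I) (\<lambda>z x. w z x * absUhat p \<mu> \<beta> h I L lam z x)
      (1 + (2 * exp (4 * cc * T\<^sup>2 * real L)) ^ h * (\<sigma> * RL p L lam / (1 - \<sigma> * RL p L lam)))"
    by (rule row_col_sums_le_mono[OF row_col_sums_le_subset])
  then show ?thesis
    using q by (intro Schur_test) (auto intro: countableI_type)
qed

end

theorem proposition4p24:
  fixes p :: "site pmf" and \<mu> :: "real measure" and cc \<beta> t lam q :: real
    and h L :: nat
  assumes symm: "\<And>x. pmf p x = pmf p (- x)"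
    and subgauss: "\<exists>c0>0. \<forall>(t'::real). \<forall>a\<in>{1,2::nat}.
        (\<lambda>x. exp (t' * coord a x) * pmf p x) summable_on UNIV \<and>
        (\<Sum>\<^sub>\<infinity>x. exp (t' * coord a x) * pmf p x) \<le> exp (c0 * t'\<^sup>2 / 2)"
    and cc_ge1: "cc \<ge> 1"
    and cc1: "\<And>t' n a. t' \<ge> 0 \<Longrightarrow> n \<ge> 1 \<Longrightarrow> a \<in> {1,2} \<Longrightarrow>
        (\<lambda>x. exp (t' * coord a x) * qn p n x) summable_on UNIV \<and>
        (\<Sum>\<^sub>\<infinity>x. exp (t' * coord a x) * qn p n x) \<le> exp (cc * t'\<^sup>2 * real n / 2)"
    and cc2: "\<And>t' n a. t' \<ge> 0 \<Longrightarrow> n \<ge> 1 \<Longrightarrow> a \<in> {1,2} \<Longrightarrow>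
        (\<lambda>x. exp (t' * coord a x) * (qn p n x)\<^sup>2 / qn p (2 * n) 0) summable_on UNIV \<and>
        (\<Sum>\<^sub>\<infinity>x. exp (t' * coord a x) * (qn p n x)\<^sup>2 / qn p (2 * n) 0) \<le> exp (cc * t'\<^sup>2 * real n / 2)"
    and cc3: "\<And>t' n. t' \<ge> 0 \<Longrightarrow> n \<ge> 1 \<Longrightarrow>
        (\<lambda>x. exp (t' * znorm x) * qn p n x) summable_on UNIV \<and>
        (\<Sum>\<^sub>\<infinity>x. exp (t' * znorm x) * qn p n x) \<le> cc * exp (2 * cc * t'\<^sup>2 * real n)"
    and cc4: "\<And>t' n x. t' \<ge> 0 \<Longrightarrow> n \<ge> 1 \<Longrightarrow>
        exp (t' * znorm x) * qn p n x \<le> cc * exp (2 * cc * t'\<^sup>2 * real n) / real n"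
    and prob: "prob_space \<mu>" and borel: "sets \<mu> = sets borel"
    and mgf: "\<And>b. integrable \<mu> (\<lambda>w. exp (b * w))"
    and mean0: "(\<integral>w. w \<partial>\<mu>) = 0" and var1: "(\<integral>w. w\<^sup>2 \<partial>\<mu>) = 1"
    and beta_pos: "\<beta> > 0"
    and h2: "h \<ge> 2"
    and moments: "\<And>I. is_partition h I \<Longrightarrow> I \<noteq> star_partition h \<Longrightarrow>
        \<bar>xi_I \<mu> \<beta> I\<bar> \<le> sigma2 \<mu> \<beta>"
    and t0: "t \<ge> 0" and lam0: "lam \<ge> 0"
    and small: "sigma2 \<mu> \<beta> * RL p L lam < 1"
    and q1: "q > 1"
  shows "(\<forall>I. is_partition h I \<and> I \<noteq> star_partition h \<longrightarrow>
            lq_opnorm_le q (configs_I h I)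
              (\<lambda>z x. Wt t z * absUhat p \<mu> \<beta> h I L lam z x / Wt t x)
              (1 + (2 * exp (4 * cc * t\<^sup>2 * real L)) ^ h
                 * (sigma2 \<mu> \<beta> * RL p L lam / (1 - sigma2 \<mu> \<beta> * RL p L lam))))
       \<and> (\<forall>s\<ge>0. \<forall>\<tau>\<in>{1, -1::real}. \<forall>a<h. \<forall>b<h. a \<noteq> b \<longrightarrow>
            (\<forall>I. is_partition h I \<and> I \<noteq> star_partition h \<longrightarrow>
              lq_opnorm_le q (configs_I h I)
                (\<lambda>z x. Vpair s a b z powr \<tau> * Wt t z * absUhat p \<mu> \<beta> h I L lam z x
                        / (Wt t x * Vpair s a b x powr \<tau>))
                (1 + (2 * exp (4 * cc * (t + s)\<^sup>2 * real L)) ^ h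
                   * (sigma2 \<mu> \<beta> * RL p L lam / (1 - sigma2 \<mu> \<beta> * RL p L lam)))))"
proof -
  \<comment> \<open>Only symm, cc_ge1, cc1, cc2, moments, small and q1 are needed: h \<ge> 2 already follows
    from I \<noteq> star_partition h, and the remaining hypotheses only describe the setting.\<close>
  interpret walk_moment_bounds p cc
    using symm cc_ge1 cc1 cc2 by unfold_locales
  have Wt_pos: "0 < Wt t z" for z
    unfolding Wt_def by (intro prod_pos) auto
  show ?thesis
  proof (intro conjI allI impI ballI)
    fix I assume "is_partition h I \<and> I \<noteq> star_partition h"
    then have "lq_opnorm_le q (configs_I h I) (\<lambda>z x. Wt t z / Wt t x * absUhat p \<mu> \<beta> h I L lam z x)
        (1 + (2 * exp (4 * cc * t\<^sup>2 * real L)) ^ h * (sigma2 \<mu> \<beta> * RL p L lam / (1 - sigma2 \<mu> \<beta> * RL p L lam)))"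
      using Wt_pos by (intro lq_opnorm_le_weighted_absUhat moments small q1 t0 Wt_ratio_le)
        (auto intro: less_imp_le)
    then show "lq_opnorm_le q (configs_I h I) (\<lambda>z x. Wt t z * absUhat p \<mu> \<beta> h I L lam z x / Wt t x)
        (1 + (2 * exp (4 * cc * t\<^sup>2 * real L)) ^ h * (sigma2 \<mu> \<beta> * RL p L lam / (1 - sigma2 \<mu> \<beta> * RL p L lam)))"
      by simp
  next
    fix s :: real and \<tau> a b I
    assume "0 \<le> s" "\<tau> \<in> {1, -1::real}" "a < h" "b < h" "a \<noteq> b" "is_partition h I \<and> I \<noteq> star_partition h"
    moreover have "0 \<le> Vpair s a b z powr \<tau> * Wt t z / (Wt t x * Vpair s a b x powr \<tau>)" for z x
      using Wt_pos[of z] Wt_pos[of x] by (simp add: Vpair_def)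
    ultimately have "lq_opnorm_le q (configs_I h I)
        (\<lambda>z x. Vpair s a b z powr \<tau> * Wt t z / (Wt t x * Vpair s a b x powr \<tau>) * absUhat p \<mu> \<beta> h I L lam z x)
        (1 + (2 * exp (4 * cc * (t + s)\<^sup>2 * real L)) ^ h * (sigma2 \<mu> \<beta> * RL p L lam / (1 - sigma2 \<mu> \<beta> * RL p L lam)))"
      using t0 by (intro lq_opnorm_le_weighted_absUhat moments small q1 Vpair_Wt_ratio_le) auto
    then show "lq_opnorm_le q (configs_I h I)
        (\<lambda>z x. Vpair s a b z powr \<tau> * Wt t z * absUhat p \<mu> \<beta> h I L lam z x / (Wt t x * Vpair s a b x powr \<tau>))
        (1 + (2 * exp (4 * cc * (t + s)\<^sup>2 * real L)) ^ h * (sigma2 \<mu> \<beta> * RL p L lam / (1 - sigma2 \<mu> \<beta> * RL p L lam)))"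
      by (simp add: mult_ac)
  qed
qed

end
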